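(* Let $G$ be a reaction network whose stoichiometric subspace is one-dimensional, and suppose $cap_{pos}(G)<+\infty$. (a) If $cap_{pos}(G)$ is even, then $cap_{stab}(G)=\frac{cap_{pos}(G)}{2}$. (b) If $cap_{pos}(G)$ is odd, then $cap_{stab}(G)=\frac{cap_{pos}(G)-1}{2}$ if $\mathcal W\cap\mathcal B=\emptyset$, and $cap_{stab}(G)=\frac{cap_{pos}(G)+1}{2}$ if $\mathcal W\cap\mathcal B\neq\emptyset$, where $\mathcal W=\{(\kappa^*,c^* ): \text{for the rate-constant vector }\kappa^*,\ G \text{ has } cap_{pos}(G) \text{ positive steady states in } \mathcal P_{c^*}\}$ and $\mathcal B=\Big\{(\kappa^*,c^* ): \sum_{j\in\mathcal L}(\beta_{1j}-\alpha_{1j})\kappa^*_j\prod_{i\in\mathcal J}|A_i|^{\alpha_{ij}}\prod_{i\in\{1,\dots,s\}\setminus\mathcal J}B_i^{\alpha_{ij}}\prod_{k\in\mathcal H,\,k\neq\tau}\Big(\frac{B_k}{|A_k|}-\frac{A_k}{|A_k|}\frac{B_\tau}{A_\tau}\Big)^{\gamma_{kj}}>0\Big\}$, the quantities $A_i,B_i,\gamma_{kj},\mathcal J,\mathcal H,\tau,\mathcal L$ being those computed from $c^*$.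
   Context: A reaction network $G$ has species $X_1,\dots,X_s$ and $m$ reactions $\sum_{i}\alpha_{ij}X_i\to\sum_i\beta_{ij}X_i$ ($j=1,\dots,m$), with $\alpha_{ij},\beta_{ij}\in\mathbb Z_{\ge0}$ and $(\alpha_{1j},\dots,\alpha_{sj})\neq(\beta_{1j},\dots,\beta_{sj})$. The stoichiometric matrix $\mathcal N$ is the $s\times m$ matrix with entries $\beta_{ij}-\alpha_{ij}$; its image $S$ is the stoichiometric subspace. For a rate-constant vector $\kappa\in\mathbb R^m_{>0}$, mass-action kinetics gives $\dot x=f(\kappa;x)=\mathcal N(\kappa_1\prod_i x_i^{\alpha_{i1}},\dots,\kappa_m\prod_i x_i^{\alpha_{im}})^\top$. Standing convention: when $S$ is one-dimensional, species are labelled so that $\beta_{11}-\alpha_{11}\neq0$; then for each $j$ there is $\lambda_j\ne0$ with $\beta_{ij}-\alpha_{ij}=\lambda_j(\beta_{i1}-\alpha_{i1})$ for all $i$ ($\lambda_1=1$), and for a total-constant vector $c\in\mathbb R^{s-1}$ the stoichiometric compatibility class is $\mathcal P_c=\{x\in\mathbb R^s_{\ge0}:(\beta_{i1}-\alpha_{i1})x_1-(\beta_{11}-\alpha_{11})x_i=c_{i-1},\ i=2,\dots,s\}$. A steady state is $x\in\mathbb R^s_{\ge0}$ with $f(\kappa;x)=0$; it is positive if $x\in\mathbb R^s_{>0}$, nondegenerate if $\mathrm{Jac}_f(x)(S)=S$ (Jacobian with respect to $x$), and stable if it is nondegenerate and all nonzero eigenvalues of $\mathrm{Jac}_f(x)$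 have negative real parts. $G$ admits $N$ (nondegenerate, resp. stable) positive steady states if for some $\kappa$ and some $c$ it has $N$ such positive steady states in $\mathcal P_c$; $cap_{pos}(G)$, $cap_{nondeg}(G)$, $cap_{stab}(G)$ are the maxima of such $N$ in $\mathbb Z_{\ge0}\cup\{+\infty\}$. Notation for a fixed $c^*\in\mathbb R^{s-1}$: $A_1=1$, $B_1=0$, and for $2\le i\le s$, $A_i=\frac{\beta_{i1}-\alpha_{i1}}{\beta_{11}-\alpha_{11}}$, $B_i=-\frac{c^*_{i-1}}{\beta_{11}-\alpha_{11}}$. For each $i$, $[i]=\{k:A_k\neq0,\ B_k/A_k=B_i/A_i\}$ if $A_i\ne0$ and $[i]=\{k:A_k=0\}$ if $A_i=0$; $r$ is the number of distinct classes and species are labelled so that $1,\dots,r$ are representatives of the distinct classes. For $k\le r$: $\varphi_k=\min_{1\le j\le m}\sum_{i\in[k]}\alpha_{ij}$ and $\gamma_{kj}=\sum_{i\in[k]}\alpha_{ij}-\varphi_k$. $\mathcal J=\{i:A_i\neq0\}$, $\mathcal H=\{k\in\{1,\dots,r\}\cap\mathcal J:\gamma_{k1},\dots,\gamma_{km}\text{ are not all the same}\}$. Standing assumption: if for some rate-constant vector $G$ has $N$ positive steady states in $\mathcal P_{c^*}$ with $0<N<\infty$, species are labelled so that $1\in\mathcal H$. For each $i$, $I_i=(-B_i/A_i,+\infty)$ if $A_i>0$, $I_i=(0,+\infty)$ if $A_i=0$, $I_i=(0,-B_i/A_i)$ if $A_i<0$; $I=\bigcap_{k\in\mathcal H}I_k$.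 $\tau$ is the index in $\mathcal H$ with $A_\tau>0$ such that $-B_\tau/A_\tau$ is the left endpoint of $I$; $\mathcal L=\{j\in\{1,\dots,m\}:\gamma_{\tau j}=0\}$. *)

theory Defs
  imports Complex_Main "HOL-Library.Extended_Nat"
begin

text \<open>Reaction network with species 0..s-1 (paper's species 1..s) and reactions 0..m-1
  (paper's reactions 1..m); alpha i j, beta i j are the stoichiometric coefficients.
  Vectors in R^s are functions nat => real vanishing outside {..<s}.\<close>

definition Nm :: "(nat \<Rightarrow> nat \<Rightarrow> nat) \<Rightarrow> (nat \<Rightarrow> nat \<Rightarrow> nat) \<Rightarrow> nat \<Rightarrow> nat \<Rightarrow> real" where
  "Nm \<alpha> \<beta> i j = real (\<beta> i j) - real (\<alpha> i j)"

definition is_network :: "nat \<Rightarrow> nat \<Rightarrow> (nat \<Rightarrow> nat \<Rightarrow> nat) \<Rightarrow> (nat \<Rightarrow> nat \<Rightarrow> nat) \<Rightarrow> bool" where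
  "is_network s m \<alpha> \<beta> \<longleftrightarrow> (\<forall>j<m. \<exists>i<s. \<alpha> i j \<noteq> \<beta> i j)"

definition stoich_subspace :: "nat \<Rightarrow> nat \<Rightarrow> (nat \<Rightarrow> nat \<Rightarrow> nat) \<Rightarrow> (nat \<Rightarrow> nat \<Rightarrow> nat) \<Rightarrow> (nat \<Rightarrow> real) set" where
  "stoich_subspace s m \<alpha> \<beta> =
     {v. \<exists>a :: nat \<Rightarrow> real. v = (\<lambda>i. if i < s then (\<Sum>j<m. Nm \<alpha> \<beta> i j * a j) else 0)}"

definition one_dim_stoich :: "nat \<Rightarrow> nat \<Rightarrow> (nat \<Rightarrow> nat \<Rightarrow> nat) \<Rightarrow> (nat \<Rightarrow> nat \<Rightarrow> nat) \<Rightarrow> bool" where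
  "one_dim_stoich s m \<alpha> \<beta> \<longleftrightarrow>
     (\<exists>w :: nat \<Rightarrow> real. (\<exists>i<s. w i \<noteq> 0) \<and>
        stoich_subspace s m \<alpha> \<beta> = {v. \<exists>t::real. v = (\<lambda>i. t * w i)})"

definition mass_action :: "nat \<Rightarrow> nat \<Rightarrow> (nat \<Rightarrow> nat \<Rightarrow> nat) \<Rightarrow> (nat \<Rightarrow> nat \<Rightarrow> nat)
     \<Rightarrow> (nat \<Rightarrow> real) \<Rightarrow> (nat \<Rightarrow> real) \<Rightarrow> nat \<Rightarrow> real" where
  "mass_action s m \<alpha> \<beta> \<kappa> x i = (\<Sum>j<m. Nm \<alpha> \<beta> i j * (\<kappa> j * (\<Prod>l<s. x l ^ \<alpha> l j)))"

definition jac :: "nat \<Rightarrow> nat \<Rightarrow> (nat \<Rightarrow> nat \<Rightarrow> nat) \<Rightarrow> (nat \<Rightarrow> nat \<Rightarrow> nat)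
     \<Rightarrow> (nat \<Rightarrow> real) \<Rightarrow> (nat \<Rightarrow> real) \<Rightarrow> nat \<Rightarrow> nat \<Rightarrow> real" where
  "jac s m \<alpha> \<beta> \<kappa> x i k = (\<Sum>j<m. Nm \<alpha> \<beta> i j * (\<kappa> j *
      (real (\<alpha> k j) * x k ^ (\<alpha> k j - 1) * (\<Prod>l\<in>{..<s} - {k}. x l ^ \<alpha> l j))))"

definition jac_map :: "nat \<Rightarrow> nat \<Rightarrow> (nat \<Rightarrow> nat \<Rightarrow> nat) \<Rightarrow> (nat \<Rightarrow> nat \<Rightarrow> nat)
     \<Rightarrow> (nat \<Rightarrow> real) \<Rightarrow> (nat \<Rightarrow> real) \<Rightarrow> (nat \<Rightarrow> real) \<Rightarrow> (nat \<Rightarrow> real)" where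
  "jac_map s m \<alpha> \<beta> \<kappa> x v = (\<lambda>i. if i < s then (\<Sum>k<s. jac s m \<alpha> \<beta> \<kappa> x i k * v k) else 0)"

definition nondegenerate :: "nat \<Rightarrow> nat \<Rightarrow> (nat \<Rightarrow> nat \<Rightarrow> nat) \<Rightarrow> (nat \<Rightarrow> nat \<Rightarrow> nat)
     \<Rightarrow> (nat \<Rightarrow> real) \<Rightarrow> (nat \<Rightarrow> real) \<Rightarrow> bool" where
  "nondegenerate s m \<alpha> \<beta> \<kappa> x \<longleftrightarrow>
     jac_map s m \<alpha> \<beta> \<kappa> x ` stoich_subspace s m \<alpha> \<beta> = stoich_subspace s m \<alpha> \<beta>"

definition is_eigenvalue :: "nat \<Rightarrow> (nat \<Rightarrow> nat \<Rightarrow> real) \<Rightarrow> complex \<Rightarrow> bool" where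
  "is_eigenvalue s M mu \<longleftrightarrow> (\<exists>v :: nat \<Rightarrow> complex. (\<exists>i<s. v i \<noteq> 0) \<and>
      (\<forall>i<s. (\<Sum>k<s. complex_of_real (M i k) * v k) = mu * v i))"

definition stable :: "nat \<Rightarrow> nat \<Rightarrow> (nat \<Rightarrow> nat \<Rightarrow> nat) \<Rightarrow> (nat \<Rightarrow> nat \<Rightarrow> nat)
     \<Rightarrow> (nat \<Rightarrow> real) \<Rightarrow> (nat \<Rightarrow> real) \<Rightarrow> bool" where
  "stable s m \<alpha> \<beta> \<kappa> x \<longleftrightarrow> nondegenerate s m \<alpha> \<beta> \<kappa> x \<and>
     (\<forall>mu. is_eigenvalue s (jac s m \<alpha> \<beta> \<kappa> x) mu \<and> mu \<noteq> 0 \<longrightarrow> Re mu < 0)"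

text \<open>Stoichiometric compatibility class P_c, written w.r.t. a pivot species p playing the role
  of the paper's species 1 (the paper's convention is p = first species).  The total-constant
  vector c is indexed by the remaining species: c i for i \<noteq> p (paper: c_{i-1}).\<close>
definition compat_class :: "nat \<Rightarrow> nat \<Rightarrow> (nat \<Rightarrow> nat \<Rightarrow> nat) \<Rightarrow> (nat \<Rightarrow> nat \<Rightarrow> nat)
     \<Rightarrow> nat \<Rightarrow> (nat \<Rightarrow> real) \<Rightarrow> (nat \<Rightarrow> real) set" where
  "compat_class s m \<alpha> \<beta> p c = {x. (\<forall>i<s. x i \<ge> 0) \<and> (\<forall>i. s \<le> i \<longrightarrow> x i = 0) \<and>
      (\<forall>i<s. i \<noteq> p \<longrightarrow> Nm \<alpha> \<beta> i 0 * x p - Nm \<alpha> \<beta> p 0 * x i = c i)}"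

definition pos_ss :: "nat \<Rightarrow> nat \<Rightarrow> (nat \<Rightarrow> nat \<Rightarrow> nat) \<Rightarrow> (nat \<Rightarrow> nat \<Rightarrow> nat)
     \<Rightarrow> nat \<Rightarrow> (nat \<Rightarrow> real) \<Rightarrow> (nat \<Rightarrow> real) \<Rightarrow> (nat \<Rightarrow> real) set" where
  "pos_ss s m \<alpha> \<beta> p \<kappa> c = {x \<in> compat_class s m \<alpha> \<beta> p c. (\<forall>i<s. x i > 0) \<and>
      (\<forall>i<s. mass_action s m \<alpha> \<beta> \<kappa> x i = 0)}"

definition stab_ss :: "nat \<Rightarrow> nat \<Rightarrow> (nat \<Rightarrow> nat \<Rightarrow> nat) \<Rightarrow> (nat \<Rightarrow> nat \<Rightarrow> nat)
     \<Rightarrow> nat \<Rightarrow> (nat \<Rightarrow> real) \<Rightarrow> (nat \<Rightarrow> real) \<Rightarrow> (nat \<Rightarrow> real) set" where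
  "stab_ss s m \<alpha> \<beta> p \<kappa> c = {x \<in> pos_ss s m \<alpha> \<beta> p \<kappa> c. stable s m \<alpha> \<beta> \<kappa> x}"

definition ecard :: "'a set \<Rightarrow> enat" where
  "ecard A = (if finite A then enat (card A) else \<infinity>)"

definition rate_vec :: "nat \<Rightarrow> (nat \<Rightarrow> real) \<Rightarrow> bool" where
  "rate_vec m \<kappa> \<longleftrightarrow> (\<forall>j<m. \<kappa> j > 0)"

definition cap_pos :: "nat \<Rightarrow> nat \<Rightarrow> (nat \<Rightarrow> nat \<Rightarrow> nat) \<Rightarrow> (nat \<Rightarrow> nat \<Rightarrow> nat) \<Rightarrow> enat" where
  "cap_pos s m \<alpha> \<beta> = Sup {ecard (pos_ss s m \<alpha> \<beta> 0 \<kappa> c) | \<kappa> c. rate_vec m \<kappa>}"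

definition cap_stab :: "nat \<Rightarrow> nat \<Rightarrow> (nat \<Rightarrow> nat \<Rightarrow> nat) \<Rightarrow> (nat \<Rightarrow> nat \<Rightarrow> nat) \<Rightarrow> enat" where
  "cap_stab s m \<alpha> \<beta> = Sup {ecard (stab_ss s m \<alpha> \<beta> 0 \<kappa> c) | \<kappa> c. rate_vec m \<kappa>}"

definition Acoef :: "(nat \<Rightarrow> nat \<Rightarrow> nat) \<Rightarrow> (nat \<Rightarrow> nat \<Rightarrow> nat) \<Rightarrow> nat \<Rightarrow> nat \<Rightarrow> real" where
  "Acoef \<alpha> \<beta> p i = Nm \<alpha> \<beta> i 0 / Nm \<alpha> \<beta> p 0"

definition Bcoef :: "(nat \<Rightarrow> nat \<Rightarrow> nat) \<Rightarrow> (nat \<Rightarrow> nat \<Rightarrow> nat) \<Rightarrow> nat \<Rightarrow> (nat \<Rightarrow> real) \<Rightarrow> nat \<Rightarrow> real" where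
  "Bcoef \<alpha> \<beta> p c i = (if i = p then 0 else - c i / Nm \<alpha> \<beta> p 0)"

definition cls :: "nat \<Rightarrow> (nat \<Rightarrow> nat \<Rightarrow> nat) \<Rightarrow> (nat \<Rightarrow> nat \<Rightarrow> nat) \<Rightarrow> nat \<Rightarrow> (nat \<Rightarrow> real) \<Rightarrow> nat \<Rightarrow> nat set" where
  "cls s \<alpha> \<beta> p c i = (if Acoef \<alpha> \<beta> p i \<noteq> 0
     then {k. k < s \<and> Acoef \<alpha> \<beta> p k \<noteq> 0 \<and>
              Bcoef \<alpha> \<beta> p c k / Acoef \<alpha> \<beta> p k = Bcoef \<alpha> \<beta> p c i / Acoef \<alpha> \<beta> p i}
     else {k. k < s \<and> Acoef \<alpha> \<beta> p k = 0})"

definition is_rep :: "nat \<Rightarrow> (nat \<Rightarrow> nat \<Rightarrow> nat) \<Rightarrow> (nat \<Rightarrow> nat \<Rightarrow> nat) \<Rightarrow> nat \<Rightarrow> (nat \<Rightarrow> real) \<Rightarrow> nat \<Rightarrow> bool" where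
  "is_rep s \<alpha> \<beta> p c k \<longleftrightarrow> k < s \<and>
     (if p \<in> cls s \<alpha> \<beta> p c k then k = p else k = Min (cls s \<alpha> \<beta> p c k))"

definition phi :: "nat \<Rightarrow> nat \<Rightarrow> (nat \<Rightarrow> nat \<Rightarrow> nat) \<Rightarrow> (nat \<Rightarrow> nat \<Rightarrow> nat) \<Rightarrow> nat \<Rightarrow> (nat \<Rightarrow> real) \<Rightarrow> nat \<Rightarrow> nat" where
  "phi s m \<alpha> \<beta> p c k = Min {(\<Sum>i\<in>cls s \<alpha> \<beta> p c k. \<alpha> i j) | j. j < m}"

definition gam :: "nat \<Rightarrow> nat \<Rightarrow> (nat \<Rightarrow> nat \<Rightarrow> nat) \<Rightarrow> (nat \<Rightarrow> nat \<Rightarrow> nat) \<Rightarrow> nat \<Rightarrow> (nat \<Rightarrow> real) \<Rightarrow> nat \<Rightarrow> nat \<Rightarrow> nat" where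
  "gam s m \<alpha> \<beta> p c k j = (\<Sum>i\<in>cls s \<alpha> \<beta> p c k. \<alpha> i j) - phi s m \<alpha> \<beta> p c k"

definition Jset :: "nat \<Rightarrow> (nat \<Rightarrow> nat \<Rightarrow> nat) \<Rightarrow> (nat \<Rightarrow> nat \<Rightarrow> nat) \<Rightarrow> nat \<Rightarrow> nat set" where
  "Jset s \<alpha> \<beta> p = {i. i < s \<and> Acoef \<alpha> \<beta> p i \<noteq> 0}"

definition Hset :: "nat \<Rightarrow> nat \<Rightarrow> (nat \<Rightarrow> nat \<Rightarrow> nat) \<Rightarrow> (nat \<Rightarrow> nat \<Rightarrow> nat) \<Rightarrow> nat \<Rightarrow> (nat \<Rightarrow> real) \<Rightarrow> nat set" where
  "Hset s m \<alpha> \<beta> p c = {k. is_rep s \<alpha> \<beta> p c k \<and> k \<in> Jset s \<alpha> \<beta> p \<and>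
      \<not> (\<forall>j<m. \<forall>j'<m. gam s m \<alpha> \<beta> p c k j = gam s m \<alpha> \<beta> p c k j')}"

definition Iint :: "(nat \<Rightarrow> nat \<Rightarrow> nat) \<Rightarrow> (nat \<Rightarrow> nat \<Rightarrow> nat) \<Rightarrow> nat \<Rightarrow> (nat \<Rightarrow> real) \<Rightarrow> nat \<Rightarrow> real set" where
  "Iint \<alpha> \<beta> p c i =
     (if Acoef \<alpha> \<beta> p i > 0 then {- Bcoef \<alpha> \<beta> p c i / Acoef \<alpha> \<beta> p i <..}
      else if Acoef \<alpha> \<beta> p i = 0 then {0<..}
      else {0 <..< - Bcoef \<alpha> \<beta> p c i / Acoef \<alpha> \<beta> p i})"

definition Iset :: "nat \<Rightarrow> nat \<Rightarrow> (nat \<Rightarrow> nat \<Rightarrow> nat) \<Rightarrow> (nat \<Rightarrow> nat \<Rightarrow> nat) \<Rightarrow> nat \<Rightarrow> (nat \<Rightarrow> real) \<Rightarrow> real set" where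
  "Iset s m \<alpha> \<beta> p c = (\<Inter>k\<in>Hset s m \<alpha> \<beta> p c. Iint \<alpha> \<beta> p c k)"

definition is_tau :: "nat \<Rightarrow> nat \<Rightarrow> (nat \<Rightarrow> nat \<Rightarrow> nat) \<Rightarrow> (nat \<Rightarrow> nat \<Rightarrow> nat) \<Rightarrow> nat \<Rightarrow> (nat \<Rightarrow> real) \<Rightarrow> nat \<Rightarrow> bool" where
  "is_tau s m \<alpha> \<beta> p c t \<longleftrightarrow> t \<in> Hset s m \<alpha> \<beta> p c \<and> Acoef \<alpha> \<beta> p t > 0 \<and>
     Iset s m \<alpha> \<beta> p c \<noteq> {} \<and> bdd_below (Iset s m \<alpha> \<beta> p c) \<and>
     Inf (Iset s m \<alpha> \<beta> p c) = - Bcoef \<alpha> \<beta> p c t / Acoef \<alpha> \<beta> p t"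

definition Lset :: "nat \<Rightarrow> nat \<Rightarrow> (nat \<Rightarrow> nat \<Rightarrow> nat) \<Rightarrow> (nat \<Rightarrow> nat \<Rightarrow> nat) \<Rightarrow> nat \<Rightarrow> (nat \<Rightarrow> real) \<Rightarrow> nat \<Rightarrow> nat set" where
  "Lset s m \<alpha> \<beta> p c t = {j. j < m \<and> gam s m \<alpha> \<beta> p c t j = 0}"

definition in_B :: "nat \<Rightarrow> nat \<Rightarrow> (nat \<Rightarrow> nat \<Rightarrow> nat) \<Rightarrow> (nat \<Rightarrow> nat \<Rightarrow> nat) \<Rightarrow> nat
     \<Rightarrow> (nat \<Rightarrow> real) \<Rightarrow> (nat \<Rightarrow> real) \<Rightarrow> bool" where
  "in_B s m \<alpha> \<beta> p \<kappa> c \<longleftrightarrow> (\<exists>t. is_tau s m \<alpha> \<beta> p c t \<and>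
     (\<Sum>j\<in>Lset s m \<alpha> \<beta> p c t. Nm \<alpha> \<beta> p j * \<kappa> j
        * (\<Prod>i\<in>Jset s \<alpha> \<beta> p. \<bar>Acoef \<alpha> \<beta> p i\<bar> ^ \<alpha> i j)
        * (\<Prod>i\<in>{..<s} - Jset s \<alpha> \<beta> p. Bcoef \<alpha> \<beta> p c i ^ \<alpha> i j)
        * (\<Prod>k\<in>Hset s m \<alpha> \<beta> p c - {t}.
             (Bcoef \<alpha> \<beta> p c k / \<bar>Acoef \<alpha> \<beta> p k\<bar>
              - Acoef \<alpha> \<beta> p k / \<bar>Acoef \<alpha> \<beta> p k\<bar> * (Bcoef \<alpha> \<beta> p c t / Acoef \<alpha> \<beta> p t))
             ^ gam s m \<alpha> \<beta> p c k j)) > 0)"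

text \<open>W \<inter> B \<noteq> {}, for some admissible labelling: a pivot species p with
  beta_{p1} - alpha_{p1} \<noteq> 0 that lies in H (the paper's standing labelling assumption 1 \<in> H).\<close>
definition W_meets_B :: "nat \<Rightarrow> nat \<Rightarrow> (nat \<Rightarrow> nat \<Rightarrow> nat) \<Rightarrow> (nat \<Rightarrow> nat \<Rightarrow> nat) \<Rightarrow> bool" where
  "W_meets_B s m \<alpha> \<beta> \<longleftrightarrow> (\<exists>p<s. Nm \<alpha> \<beta> p 0 \<noteq> 0 \<and> (\<exists>\<kappa> c. rate_vec m \<kappa> \<and>
      ecard (pos_ss s m \<alpha> \<beta> p \<kappa> c) = cap_pos s m \<alpha> \<beta> \<and>
      p \<in> Hset s m \<alpha> \<beta> p c \<and> in_B s m \<alpha> \<beta> p \<kappa> c))"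

end

(*
  Since the stoichiometric subspace is spanned by the first reaction vector a, the mass-action
  field is f(x) = a h(x), and its Jacobian a (grad h)^T has mu = grad h . a as its only eigenvalue
  that can be nonzero.  Parametrising a compatibility class by the coordinate t of a pivot species
  turns the positive steady states into the roots of a univariate polynomial F on an open interval,
  stability meaning F'(t) < 0.  Between two stable roots lies another root, so at most (N + 1) / 2
  of N roots are stable, and at most N / 2 if the smallest root is unstable.  Conversely, perturbing
  one rate constant of a configuration with the maximal number N of roots keeps N roots and makes
  them simple, so that stable and unstable roots alternate.  Whether the smallest root can be
  stable is decided by the sign, at the left endpoint of I, of the reduced polynomial obtained from F
  by dividing out a factor that is positive on the class: this is the condition defining B.
*)

theory Submission
  imports Defs "HOL-Computational_Algebra.Polynomial"
begin

lemma add_mult_pos_if_small: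
  fixes g \<epsilon> T :: real
  assumes "0 < g" "0 < \<epsilon>" "\<epsilon> < g / (\<bar>T\<bar> + 1)"
  shows "0 < g + \<epsilon> * T"
proof -
  have "\<epsilon> * (\<bar>T\<bar> + 1) < g" using assms(3) by (simp add: pos_less_divide_eq add_pos_nonneg)
  moreover have "- (\<epsilon> * \<bar>T\<bar>) \<le> \<epsilon> * T" using assms(2) mult_left_mono[of "- \<bar>T\<bar>" T \<epsilon>] by simp
  ultimately show ?thesis using assms(2) by (simp add: algebra_simps)
qed

lemma divide_abs_affine:
  fixes A t B :: real
  assumes "A \<noteq> 0"
  shows "(A * t + B) / \<bar>A\<bar> = (A / \<bar>A\<bar>) * (t + B / A)"
  using assms by (simp add: field_simps)

lemma change_pivot_identity:
  fixes ap aq ai xp xq xi cq ci :: real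
  assumes "ap \<noteq> 0" "ai * xp - ap * xi = ci" "aq * xp - ap * xq = cq"
  shows "ai * xq - aq * xi = (aq * ci - ai * cq) / ap"
proof -
  have e: "ap * xq = aq * xp - cq" "ap * xi = ai * xp - ci" using assms(2,3) by linarith+
  have "ap * (ai * xq - aq * xi) = ai * (ap * xq) - aq * (ap * xi)" by (simp add: algebra_simps)
  also have "\<dots> = ai * (aq * xp - cq) - aq * (ai * xp - ci)" by (simp only: e)
  also have "\<dots> = aq * ci - ai * cq" by (simp add: algebra_simps)
  finally have "ap * (ai * xq - aq * xi) = aq * ci - ai * cq" .
  then show ?thesis using assms(1) by (simp add: eq_divide_eq mult.commute)
qed

lemma change_pivot_identity_back:
  fixes ap aq ai xp xq xi cq ci di :: real
  assumes "aq \<noteq> 0" "ai * xq - aq * xi = di" "ap * di = aq * ci - ai * cq" "ap * xq - aq * xp = - cq"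
  shows "ai * xp - ap * xi = ci"
proof -
  have e: "aq * xi = ai * xq - di" "ap * xq = aq * xp - cq" using assms(2,4) by linarith+
  have "aq * (ai * xp - ap * xi - ci) = ai * aq * xp - ap * (aq * xi) - aq * ci" by (simp add: algebra_simps)
  also have "\<dots> = ai * aq * xp - ap * (ai * xq - di) - aq * ci" by (simp only: e)
  also have "\<dots> = ai * aq * xp - ai * (ap * xq) + ap * di - aq * ci" by (simp add: algebra_simps)
  also have "\<dots> = ai * aq * xp - ai * (aq * xp - cq) + (aq * ci - ai * cq) - aq * ci" by (simp only: e assms(3))
  also have "\<dots> = 0" by (simp add: algebra_simps)
  finally have "aq * (ai * xp - ap * xi - ci) = 0" .
  then show ?thesis using assms(1) by simp
qed

lemma cross_diff_zero_iff_ratio_eq: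
  fixes ap ak a0 hk hp :: real
  assumes "ap \<noteq> 0" "ak \<noteq> 0" "a0 \<noteq> 0"
  shows "((ap * hk - ak * hp) / a0 = 0) \<longleftrightarrow> ((- hk / a0) / (ak / a0) = (- hp / a0) / (ap / a0))"
proof -
  have l: "((ap * hk - ak * hp) / a0 = 0) \<longleftrightarrow> ap * hk = ak * hp" using assms(3) by simp
  have r1: "(- hk / a0) / (ak / a0) = - hk / ak" using assms by (simp add: field_simps)
  have r2: "(- hp / a0) / (ap / a0) = - hp / ap" using assms by (simp add: field_simps)
  have "(- hk / ak = - hp / ap) \<longleftrightarrow> (- hk * ap = - hp * ak)" using assms(2,1) by (rule frac_eq_eq)
  then show ?thesis unfolding l r1 r2 by (simp add: mult.commute)
qed

lemma Inf_eq_if_between: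
  fixes S :: "real set"
  assumes "v < t" "{v<..t} \<subseteq> S" "S \<subseteq> {v<..}"
  shows "S \<noteq> {}" "bdd_below S" "Inf S = v"
proof -
  show ne: "S \<noteq> {}" using assms by auto
  show "bdd_below S" unfolding bdd_below_def using assms(3) by (intro exI[of _ v]) (auto simp: less_imp_le)
  show "Inf S = v"
  proof (rule cInf_eq_non_empty[OF ne])
    show "v \<le> x" if "x \<in> S" for x using that assms(3) by auto
    fix y assume lower: "\<And>x. x \<in> S \<Longrightarrow> y \<le> x"
    show "y \<le> v"
    proof (rule ccontr)
      assume "\<not> y \<le> v"
      define w where "w = min t ((v + y) / 2)"
      have "w \<in> S" using assms(1,2) \<open>\<not> y \<le> v\<close> unfolding w_def by auto
      moreover have "w < y" using \<open>\<not> y \<le> v\<close> unfolding w_def by (simp add: min_less_iff_disj)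
      ultimately show False using lower by force
    qed
  qed
qed

lemma ecard_finite: "finite A \<Longrightarrow> ecard A = enat (card A)"
  unfolding ecard_def by simp

lemma ecard_le_enat: "ecard A \<le> enat N \<Longrightarrow> finite A \<and> card A \<le> N"
  unfolding ecard_def by (cases "finite A") auto

lemma ecard_enat: "ecard A = enat N \<Longrightarrow> finite A \<and> card A = N"
  unfolding ecard_def by (cases "finite A") auto

lemma ecard_image: "inj f \<Longrightarrow> ecard (f ` A) = ecard A"
  unfolding ecard_def by (auto simp: card_image finite_image_iff inj_on_subset[of f UNIV])

lemma rate_vec_one: "rate_vec m (\<lambda>_. 1)"
  unfolding rate_vec_def by simp

section \<open>Roots of real polynomials\<close>

lemma open_real_nbhd:
  fixes D :: "real set"
  assumes "open D" "z \<in> D"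
  shows "\<exists>r>0. \<forall>y. \<bar>y - z\<bar> < r \<longrightarrow> y \<in> D"
  using assms unfolding open_dist dist_real_def by blast

lemma pderiv_sum: "pderiv (sum f A) = (\<Sum>x\<in>A. pderiv (f x))"
  by (induct A rule: infinite_finite_induct) (auto simp: pderiv_add)

lemma poly_root_between_if_pderiv_neg:
  fixes P :: "real poly"
  assumes "r < r'" "poly P r = 0" "poly P r' = 0"
    and "poly (pderiv P) r < 0" "poly (pderiv P) r' < 0"
  shows "\<exists>z. r < z \<and> z < r' \<and> poly P z = 0"
proof -
  obtain d where d: "d > 0" "\<And>h. 0 < h \<Longrightarrow> h < d \<Longrightarrow> poly P (r + h) < 0"
    using DERIV_neg_dec_right[OF poly_DERIV assms(4)] assms(2) by auto
  obtain d' where d': "d' > 0" "\<And>h. 0 < h \<Longrightarrow> h < d' \<Longrightarrow> 0 < poly P (r' - h)"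
    using DERIV_neg_dec_left[OF poly_DERIV assms(5)] assms(3) by auto
  define h where "h = min (min d d') (r' - r) / 3"
  have "min (min d d') (r' - r) \<le> d" "min (min d d') (r' - r) \<le> d'"
    "min (min d d') (r' - r) \<le> r' - r" "0 < min (min d d') (r' - r)"
    using d(1) d'(1) assms(1) by auto
  then have h: "0 < h" "h < d" "h < d'" "r + h < r' - h" unfolding h_def by linarith+
  obtain z where "r + h < z" "z < r' - h" "poly P z = 0"
    using poly_IVT_pos[OF h(4) d(2)[OF h(1,2)] d'(2)[OF h(1,3)]] by blast
  then show ?thesis using h(1) by (intro exI[of _ z]) auto
qed

lemma poly_root_between_if_pderiv_pos:
  fixes P :: "real poly"
  assumes "r < r'" "poly P r = 0" "poly P r' = 0"
    and "poly (pderiv P) r > 0" "poly (pderiv P) r' > 0"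
  shows "\<exists>z. r < z \<and> z < r' \<and> poly P z = 0"
  using poly_root_between_if_pderiv_neg[of r r' "- P"] assms by (simp add: pderiv_minus)

lemma poly_same_sign_if_no_root_between:
  fixes P :: "real poly"
  assumes "\<And>z. a < z \<Longrightarrow> z < b \<Longrightarrow> poly P z \<noteq> 0" "a < y" "y < b"
  shows "0 \<le> poly P a * poly P y"
proof (rule ccontr)
  assume "\<not> 0 \<le> poly P a * poly P y"
  then have "poly P a * poly P y < 0" by simp
  then obtain z where "a < z" "z < y" "poly P z = 0" using poly_IVT[OF assms(2)] by blast
  then show False using assms by force
qed

lemma card_le_card_Diff_if_separated:
  fixes Z S T :: "real set"
  assumes "finite Z" "S \<subseteq> Z" "T \<subseteq> S"
    and separated: "\<And>r r'. r \<in> S \<Longrightarrow> r' \<in> S \<Longrightarrow> r < r' \<Longrightarrow> \<exists>z\<in>Z. r < z \<and> z < r'"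
    and below: "\<And>r. r \<in> T \<Longrightarrow> \<exists>z\<in>Z. z < r"
  shows "card T \<le> card (Z - S)"
proof -
  define pred where "pred r = Max {z \<in> Z. z < r}" for r
  have pred: "pred r \<in> Z" "pred r < r" "\<And>z. z \<in> Z \<Longrightarrow> z < r \<Longrightarrow> z \<le> pred r" if "r \<in> T" for r
  proof -
    have "finite {z \<in> Z. z < r}" "{z \<in> Z. z < r} \<noteq> {}" using assms(1) below[OF that] by auto
    then show "pred r \<in> Z" "pred r < r" "\<And>z. z \<in> Z \<Longrightarrow> z < r \<Longrightarrow> z \<le> pred r"
      unfolding pred_def using Max_in by auto
  qed
  have "pred r \<in> Z - S" if r: "r \<in> T" for r
  proof -
    have "pred r \<notin> S"
    proof
      assume "pred r \<in> S"
      then obtain z where "z \<in> Z" "pred r < z" "z < r"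
        using separated[of "pred r" r] pred[OF r] r assms(3) by blast
      then show False using pred(3)[OF r] by force
    qed
    then show ?thesis using pred(1)[OF r] by blast
  qed
  moreover have "strict_mono_on T pred"
  proof (rule strict_mono_onI)
    fix r r' assume "r \<in> T" "r' \<in> T" "r < r'"
    then show "pred r < pred r'" using pred(2)[of r] pred(3)[of r' r] assms(2,3) by force
  qed
  ultimately show ?thesis
    using card_inj_on_le[OF strict_mono_on_imp_inj_on] assms(1) by blast
qed

lemma card_le_card_Diff_Suc_if_separated:
  fixes Z S :: "real set"
  assumes "finite Z" "S \<subseteq> Z"
    and separated: "\<And>r r'. r \<in> S \<Longrightarrow> r' \<in> S \<Longrightarrow> r < r' \<Longrightarrow> \<exists>z\<in>Z. r < z \<and> z < r'"
  shows "card S \<le> card (Z - S) + 1"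
proof (cases "S = {}")
  case False
  have finS: "finite S" using assms(1,2) finite_subset by blast
  have "card (S - {Min S}) \<le> card (Z - S)"
  proof (rule card_le_card_Diff_if_separated[OF assms(1,2) _ separated])
    fix r assume "r \<in> S - {Min S}"
    then have "Min S < r" using finS by (metis DiffE Min_le insertCI order_le_less)
    then show "\<exists>z\<in>Z. z < r" using Min_in[OF finS False] assms(2) by blast
  qed auto
  then show ?thesis using False finS by (simp add: card_Diff_singleton)
qed simp

lemma card_le_card_Diff_if_separated_Min_notin:
  fixes Z S :: "real set"
  assumes "finite Z" "S \<subseteq> Z" "Z \<noteq> {}" "Min Z \<notin> S"
    and separated: "\<And>r r'. r \<in> S \<Longrightarrow> r' \<in> S \<Longrightarrow> r < r' \<Longrightarrow> \<exists>z\<in>Z. r < z \<and> z < r'"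
  shows "card S \<le> card (Z - S)"
proof (rule card_le_card_Diff_if_separated[OF assms(1,2) order_refl separated])
  fix r assume "r \<in> S"
  then have "Min Z < r" using assms by (metis Min_le order_le_less subsetD)
  then show "\<exists>z\<in>Z. z < r" using Min_in[OF assms(1,3)] by blast
qed

text \<open>The Wronskian of P and Q vanishes at t exactly when the pencil P + \<epsilon> Q has a double root
  at t for \<epsilon> = - P(t) / Q(t); a vanishing Wronskian makes P / Q locally constant.\<close>
lemma finite_double_root_perturbations:
  fixes P Q :: "real poly"
  assumes "open D" and Q_pos: "\<And>t. t \<in> D \<Longrightarrow> poly Q t > 0"
    and "z \<in> D" "poly P z = 0" and fin: "finite {t \<in> D. poly P t = 0}"
  shows "finite {\<epsilon>. \<exists>t\<in>D. poly (P + smult \<epsilon> Q) t = 0 \<and> poly (pderiv (P + smult \<epsilon> Q)) t = 0}"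
proof (cases "pderiv P * Q - P * pderiv Q = 0")
  case False
  have "{\<epsilon>. \<exists>t\<in>D. poly (P + smult \<epsilon> Q) t = 0 \<and> poly (pderiv (P + smult \<epsilon> Q)) t = 0}
      \<subseteq> (\<lambda>t. - poly P t / poly Q t) ` {t. poly (pderiv P * Q - P * pderiv Q) t = 0}"
  proof
    fix \<epsilon> assume "\<epsilon> \<in> {\<epsilon>. \<exists>t\<in>D. poly (P + smult \<epsilon> Q) t = 0 \<and> poly (pderiv (P + smult \<epsilon> Q)) t = 0}"
    then obtain t where t: "t \<in> D" "poly P t = - \<epsilon> * poly Q t" "poly (pderiv P) t = - \<epsilon> * poly (pderiv Q) t"
      by (auto simp: pderiv_add pderiv_smult eq_neg_iff_add_eq_0)
    then have "\<epsilon> = - poly P t / poly Q t" using Q_pos[OF t(1)] by simp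
    moreover have "poly (pderiv P * Q - P * pderiv Q) t = 0" using t(2,3) by simp
    ultimately show "\<epsilon> \<in> (\<lambda>t. - poly P t / poly Q t) ` {t. poly (pderiv P * Q - P * pderiv Q) t = 0}"
      by blast
  qed
  then show ?thesis using poly_roots_finite[OF False] finite_subset by blast
next
  case True
  obtain r where r: "r > 0" "\<And>y. \<bar>y - z\<bar> < r \<Longrightarrow> y \<in> D" using open_real_nbhd[OF assms(1,3)] by blast
  have "poly P x = 0" if x: "z < x" "x < z + r" for x
  proof -
    have inD: "y \<in> D" if "z \<le> y" "y \<le> x" for y using r that x by auto
    define f where "f y = poly P y / poly Q y" for y
    have "continuous_on {z..x} f" unfolding f_def
      by (intro continuous_intros) (use inD Q_pos in force)
    moreover have "DERIV f y :> 0" if "z < y" "y < x" for y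
    proof -
      have "poly Q y \<noteq> 0" using Q_pos[of y] inD[of y] that by force
      then have "DERIV f y :> (poly (pderiv P) y * poly Q y - poly P y * poly (pderiv Q) y) / (poly Q y * poly Q y)"
        unfolding f_def by (intro DERIV_divide poly_DERIV)
      moreover have "poly (pderiv P) y * poly Q y - poly P y * poly (pderiv Q) y = 0"
        using arg_cong[OF True, of "\<lambda>W. poly W y"] by simp
      ultimately show ?thesis by simp
    qed
    ultimately have "f x = f z" using DERIV_isconst_end[of z x f] x by blast
    then show ?thesis using Q_pos[of x] inD[of x] x \<open>poly P z = 0\<close> unfolding f_def by simp
  qed
  then have "{z<..<z + r} \<subseteq> {t \<in> D. poly P t = 0}" using r by auto
  then show ?thesis using fin finite_subset infinite_Ioo r(1) by (metis less_add_same_cancel1)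
qed

lemma isolating_radius:
  fixes Z D :: "real set"
  assumes "open D" "finite Z" "Z \<subseteq> D"
  obtains \<delta> where "\<delta> > 0" "\<And>z. z \<in> Z \<Longrightarrow> {z - \<delta>..z + \<delta>} \<subseteq> D"
    "\<And>z z'. z \<in> Z \<Longrightarrow> z' \<in> Z \<Longrightarrow> z \<noteq> z' \<Longrightarrow> 2 * \<delta> < \<bar>z - z'\<bar>"
    "\<And>z. z \<in> Z \<Longrightarrow> z - \<delta> \<notin> Z \<and> z + \<delta> \<notin> Z"
proof -
  have "\<forall>z\<in>Z. \<exists>r>0. \<forall>y. \<bar>y - z\<bar> < r \<longrightarrow> y \<in> D" using open_real_nbhd assms(1,3) by blast
  then obtain R where R: "\<And>z. z \<in> Z \<Longrightarrow> R z > 0" "\<And>z y. z \<in> Z \<Longrightarrow> \<bar>y - z\<bar> < R z \<Longrightarrow> y \<in> D"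
    by metis
  define dists where "dists = (\<lambda>(z, z'). \<bar>z - z'\<bar>) ` {(z, z') \<in> Z \<times> Z. z \<noteq> z'}"
  define d where "d = Min (insert 1 (R ` Z \<union> dists))"
  have "finite dists" unfolding dists_def
    by (rule finite_imageI, rule finite_subset[of _ "Z \<times> Z"]) (use assms(2) in auto)
  then have fin: "finite (insert 1 (R ` Z \<union> dists))" using assms(2) by simp
  have "\<forall>x\<in>dists. x > 0" unfolding dists_def by auto
  then have "d > 0" unfolding d_def using fin R(1) by (auto simp: Min_gr_iff)
  moreover have "{z - d / 3..z + d / 3} \<subseteq> D" if "z \<in> Z" for z
  proof -
    have "d \<le> R z" unfolding d_def using fin that by auto
    then show ?thesis using R(2)[OF that] \<open>d > 0\<close> by auto
  qed
  moreover have apart: "2 * (d / 3) < \<bar>z - z'\<bar>" if "z \<in> Z" "z' \<in> Z" "z \<noteq> z'" for z z'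
  proof -
    have "\<bar>z - z'\<bar> \<in> dists" unfolding dists_def using that by force
    then have "d \<le> \<bar>z - z'\<bar>" unfolding d_def using fin by (intro Min_le) auto
    then show ?thesis using \<open>d > 0\<close> by linarith
  qed
  moreover have "w \<notin> Z" if "z \<in> Z" "\<bar>w - z\<bar> = d / 3" for z w
    using apart[OF that(1), of w] that \<open>d > 0\<close> by (auto simp: abs_minus_commute)
  then have "z - d / 3 \<notin> Z \<and> z + d / 3 \<notin> Z" if "z \<in> Z" for z
    using that \<open>d > 0\<close> by simp
  ultimately show ?thesis using that[of "d / 3"] by simp
qed

lemma sign_preserving_perturbation:
  fixes P Q :: "real poly" and E :: "real set"
  assumes "finite E" and P_nz: "\<And>w. w \<in> E \<Longrightarrow> poly P w \<noteq> 0" and Q_pos: "\<And>w. w \<in> E \<Longrightarrow> poly Q w > 0"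
  shows "\<exists>e>0. \<forall>\<epsilon> w. \<bar>\<epsilon>\<bar> < e \<longrightarrow> w \<in> E \<longrightarrow> 0 < poly (P + smult \<epsilon> Q) w * poly P w"
proof -
  define e where "e = Min (insert 1 ((\<lambda>w. \<bar>poly P w\<bar> / poly Q w) ` E))"
  have fin: "finite (insert 1 ((\<lambda>w. \<bar>poly P w\<bar> / poly Q w) ` E))" using assms(1) by simp
  have "e > 0" unfolding e_def using fin P_nz Q_pos by (auto simp: Min_gr_iff)
  moreover have "0 < poly (P + smult \<epsilon> Q) w * poly P w" if "\<bar>\<epsilon>\<bar> < e" "w \<in> E" for \<epsilon> w
  proof -
    have "e \<le> \<bar>poly P w\<bar> / poly Q w" unfolding e_def using fin that(2) by auto
    then have "\<bar>\<epsilon>\<bar> < \<bar>poly P w\<bar> / poly Q w" using that(1) by linarith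
    then have "\<bar>\<epsilon>\<bar> * poly Q w < \<bar>poly P w\<bar>" using Q_pos[OF that(2)] by (simp add: pos_less_divide_eq)
    then have "\<bar>\<epsilon>\<bar> * poly Q w * \<bar>poly P w\<bar> < \<bar>poly P w\<bar> * \<bar>poly P w\<bar>"
      by (rule mult_strict_right_mono) (use P_nz[OF that(2)] in simp)
    moreover have "\<bar>\<epsilon> * poly Q w * poly P w\<bar> = \<bar>\<epsilon>\<bar> * poly Q w * \<bar>poly P w\<bar>"
      using Q_pos[OF that(2)] by (simp add: abs_mult)
    moreover have "\<bar>poly P w\<bar> * \<bar>poly P w\<bar> = poly P w * poly P w" by (simp add: abs_mult[symmetric])
    ultimately have "- (\<epsilon> * poly Q w * poly P w) < poly P w * poly P w" by linarith
    then show ?thesis by (simp add: algebra_simps)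
  qed
  ultimately show ?thesis by blast
qed

text \<open>If P(u) and P(v) at the ends of an isolating interval of a root of P keep their signs under
  the perturbation P + \<epsilon> Q, then a sign change persists as a root, and a root at which P touches
  zero from the side opposite to \<epsilon> (where P + \<epsilon> Q has the sign of \<epsilon>) splits into two.\<close>
definition root_count_lb :: "real poly \<Rightarrow> real \<Rightarrow> real \<Rightarrow> real \<Rightarrow> nat" where
  "root_count_lb P \<epsilon> u v =
     (if poly P u * poly P v < 0 then 1 else if \<epsilon> * poly P u < 0 \<and> \<epsilon> * poly P v < 0 then 2 else 0)"

lemma root_count_lb_reflect:
  assumes "poly P u \<noteq> 0" "poly P v \<noteq> 0" "\<epsilon> \<noteq> 0"
  shows "root_count_lb P \<epsilon> u v + root_count_lb P (- \<epsilon>) u v = 2"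
proof (cases "poly P u * poly P v < 0")
  case False
  then have "0 < poly P u * poly P v" using assms(1,2) by (simp add: not_less order_le_less)
  then have "\<epsilon> * poly P v < 0 \<longleftrightarrow> \<epsilon> * poly P u < 0"
    by (auto simp: zero_less_mult_iff mult_less_0_iff)
  moreover have "0 < \<epsilon> * poly P v \<longleftrightarrow> 0 < \<epsilon> * poly P u"
    using \<open>0 < poly P u * poly P v\<close> by (auto simp: zero_less_mult_iff)
  moreover have "\<epsilon> * poly P u \<noteq> 0" using assms(1,3) by simp
  then have "\<epsilon> * poly P u < 0 \<or> 0 < \<epsilon> * poly P u" by linarith
  ultimately show ?thesis using False unfolding root_count_lb_def by auto
qed (simp add: root_count_lb_def)

lemma root_count_lb_le_card:
  fixes P Q :: "real poly"
  assumes "u < z" "z < v" "poly P z = 0" "poly Q z > 0"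
    and u: "0 < poly (P + smult \<epsilon> Q) u * poly P u" and v: "0 < poly (P + smult \<epsilon> Q) v * poly P v"
  shows "root_count_lb P \<epsilon> u v \<le> card {x. u < x \<and> x < v \<and> poly (P + smult \<epsilon> Q) x = 0}"
proof -
  define R where "R = P + smult \<epsilon> Q"
  define W where "W = {x. u < x \<and> x < v \<and> poly R x = 0}"
  have "poly R u \<noteq> 0" using u unfolding R_def by auto
  then have "R \<noteq> 0" by auto
  have finW: "finite W" unfolding W_def
    by (rule finite_subset[OF _ poly_roots_finite[OF \<open>R \<noteq> 0\<close>]]) auto
  have Rz: "poly R z = \<epsilon> * poly Q z" unfolding R_def using assms(3) by simp
  have u': "0 < poly R u * poly P u" and v': "0 < poly R v * poly P v" using u v unfolding R_def by simp_all
  have opposite: "a * b < 0" if "0 < a * p" "0 < b * p'" "p * p' < 0" for a b p p' :: real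
    using that by (auto simp: zero_less_mult_iff mult_less_0_iff)
  have against: "a * (e * q) < 0" if "0 < a * p" "e * p < 0" "0 < q" for a e p q :: real
    using that by (auto simp: zero_less_mult_iff mult_less_0_iff)
  show ?thesis
  proof (cases "poly P u * poly P v < 0")
    case True
    then have "poly R u * poly R v < 0" using opposite u' v' by blast
    moreover have "u < v" using assms(1,2) by simp
    ultimately obtain x where "u < x" "x < v" "poly R x = 0" using poly_IVT by blast
    then have "W \<noteq> {}" unfolding W_def by blast
    then show ?thesis using True finW unfolding root_count_lb_def W_def R_def
      by (simp add: Suc_le_eq card_gt_0_iff)
  next
    case no_change: False
    show ?thesis
    proof (cases "\<epsilon> * poly P u < 0 \<and> \<epsilon> * poly P v < 0")
      case True
      have "poly R u * poly R z < 0" unfolding Rz by (rule against[OF u' _ assms(4)]) (use True in simp)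
      moreover have "poly R v * poly R z < 0" unfolding Rz by (rule against[OF v' _ assms(4)]) (use True in simp)
      ultimately have "poly R u * poly R z < 0" "poly R z * poly R v < 0" by (simp_all add: mult.commute)
      then obtain x x' where "u < x" "x < z" "poly R x = 0" "z < x'" "x' < v" "poly R x' = 0"
        using poly_IVT[of u z R] poly_IVT[of z v R] assms(1,2) by blast
      then have "{x, x'} \<subseteq> W" "card {x, x'} = 2" unfolding W_def using assms(1,2) by auto
      then have "2 \<le> card W" using card_mono[OF finW] by metis
      then show ?thesis using no_change True unfolding root_count_lb_def W_def R_def by simp
    qed (use no_change in \<open>auto simp: root_count_lb_def\<close>)
  qed
qed

lemma sum_root_count_lb_le_card:
  fixes P Q :: "real poly"
  assumes "finite Z" "\<delta> > 0"
    and in_D: "\<And>z. z \<in> Z \<Longrightarrow> {z - \<delta>..z + \<delta>} \<subseteq> D"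
    and apart: "\<And>z z'. z \<in> Z \<Longrightarrow> z' \<in> Z \<Longrightarrow> z \<noteq> z' \<Longrightarrow> 2 * \<delta> < \<bar>z - z'\<bar>"
    and roots: "\<And>z. z \<in> Z \<Longrightarrow> poly P z = 0 \<and> poly Q z > 0"
    and keep: "\<And>z. z \<in> Z \<Longrightarrow> 0 < poly (P + smult \<epsilon> Q) (z - \<delta>) * poly P (z - \<delta>) \<and>
                              0 < poly (P + smult \<epsilon> Q) (z + \<delta>) * poly P (z + \<delta>)"
    and fin: "finite {t \<in> D. poly (P + smult \<epsilon> Q) t = 0}"
  shows "(\<Sum>z\<in>Z. root_count_lb P \<epsilon> (z - \<delta>) (z + \<delta>)) \<le> card {t \<in> D. poly (P + smult \<epsilon> Q) t = 0}"
proof -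
  define W where "W z = {x. z - \<delta> < x \<and> x < z + \<delta> \<and> poly (P + smult \<epsilon> Q) x = 0}" for z
  have W_sub: "W z \<subseteq> {t \<in> D. poly (P + smult \<epsilon> Q) t = 0}" if "z \<in> Z" for z
    using in_D[OF that] unfolding W_def by auto
  have "(\<Sum>z\<in>Z. root_count_lb P \<epsilon> (z - \<delta>) (z + \<delta>)) \<le> (\<Sum>z\<in>Z. card (W z))"
  proof (rule sum_mono)
    fix z assume "z \<in> Z"
    then show "root_count_lb P \<epsilon> (z - \<delta>) (z + \<delta>) \<le> card (W z)"
      unfolding W_def using \<open>\<delta> > 0\<close> roots keep by (intro root_count_lb_le_card) auto
  qed
  also have "\<dots> = card (\<Union>z\<in>Z. W z)"
  proof (rule card_UN_disjoint[symmetric])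
    show "\<forall>z\<in>Z. finite (W z)" using W_sub fin finite_subset by blast
    show "\<forall>z\<in>Z. \<forall>z'\<in>Z. z \<noteq> z' \<longrightarrow> W z \<inter> W z' = {}"
    proof (intro ballI impI)
      fix z z' assume "z \<in> Z" "z' \<in> Z" "z \<noteq> z'"
      then have "2 * \<delta> < \<bar>z - z'\<bar>" by (rule apart)
      then show "W z \<inter> W z' = {}" unfolding W_def by (auto simp: abs_if split: if_splits)
    qed
  qed (rule assms(1))
  also have "\<dots> \<le> card {t \<in> D. poly (P + smult \<epsilon> Q) t = 0}" using W_sub fin by (intro card_mono) auto
  finally show ?thesis .
qed

text \<open>If P has the maximal number N of roots in D among all P + \<epsilon> Q with small \<epsilon>, then the
  lower bounds for \<epsilon> and -\<epsilon> add up to 2 N, so both perturbations keep exactly N roots.\<close>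
lemma perturbation_keeps_root_count:
  fixes P Q :: "real poly" and D :: "real set"
  assumes "open D" and Q_pos: "\<And>t. t \<in> D \<Longrightarrow> poly Q t > 0"
    and fin: "finite {t \<in> D. poly P t = 0}" and card: "card {t \<in> D. poly P t = 0} = N"
    and "e > 0"
    and maximal: "\<And>\<epsilon>. \<bar>\<epsilon>\<bar> < e \<Longrightarrow> finite {t \<in> D. poly (P + smult \<epsilon> Q) t = 0} \<and>
                     card {t \<in> D. poly (P + smult \<epsilon> Q) t = 0} \<le> N"
  obtains e2 where "e2 > 0" "\<And>\<epsilon>. 0 < \<epsilon> \<Longrightarrow> \<epsilon> < e2 \<Longrightarrow> card {t \<in> D. poly (P + smult \<epsilon> Q) t = 0} = N"
proof -
  define Z where "Z \<epsilon> = {t \<in> D. poly (P + smult \<epsilon> Q) t = 0}" for \<epsilon>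
  have Z0: "Z 0 = {t \<in> D. poly P t = 0}" unfolding Z_def by simp
  obtain \<delta> where \<delta>: "\<delta> > 0" "\<And>z. z \<in> Z 0 \<Longrightarrow> {z - \<delta>..z + \<delta>} \<subseteq> D"
    "\<And>z z'. z \<in> Z 0 \<Longrightarrow> z' \<in> Z 0 \<Longrightarrow> z \<noteq> z' \<Longrightarrow> 2 * \<delta> < \<bar>z - z'\<bar>"
    "\<And>z. z \<in> Z 0 \<Longrightarrow> z - \<delta> \<notin> Z 0 \<and> z + \<delta> \<notin> Z 0"
    using isolating_radius[OF assms(1) fin[folded Z0]] unfolding Z0 by blast
  define E where "E = (\<lambda>z. z - \<delta>) ` Z 0 \<union> (\<lambda>z. z + \<delta>) ` Z 0"
  have ends_in_E: "z - \<delta> \<in> E" "z + \<delta> \<in> E" if "z \<in> Z 0" for z unfolding E_def using that by auto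
  have E: "w \<in> D \<and> poly P w \<noteq> 0" if w: "w \<in> E" for w
  proof -
    obtain z where z: "z \<in> Z 0" "w = z - \<delta> \<or> w = z + \<delta>" using w unfolding E_def by blast
    then have "w \<in> D" using \<delta>(1) \<delta>(2)[OF z(1)] by auto
    moreover have "w \<notin> Z 0" using \<delta>(4)[OF z(1)] z(2) by auto
    ultimately show ?thesis unfolding Z0 by simp
  qed
  have "finite E" unfolding E_def using fin Z0 by simp
  have "\<exists>e1>0. \<forall>\<epsilon> w. \<bar>\<epsilon>\<bar> < e1 \<longrightarrow> w \<in> E \<longrightarrow> 0 < poly (P + smult \<epsilon> Q) w * poly P w"
    by (rule sign_preserving_perturbation) (use \<open>finite E\<close> E Q_pos in auto)
  then obtain e1 where "e1 > 0"
    and keep: "\<And>\<epsilon> w. \<bar>\<epsilon>\<bar> < e1 \<Longrightarrow> w \<in> E \<Longrightarrow> 0 < poly (P + smult \<epsilon> Q) w * poly P w"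
    by blast
  define e2 where "e2 = min e e1"
  have maxZ: "finite (Z \<epsilon>) \<and> card (Z \<epsilon>) \<le> N" if "\<bar>\<epsilon>\<bar> < e2" for \<epsilon>
    unfolding Z_def using maximal that unfolding e2_def by simp
  have lower: "(\<Sum>z\<in>Z 0. root_count_lb P \<epsilon> (z - \<delta>) (z + \<delta>)) \<le> card (Z \<epsilon>)" if "\<bar>\<epsilon>\<bar> < e2" for \<epsilon>
    unfolding Z_def[of \<epsilon>]
  proof (rule sum_root_count_lb_le_card[OF _ \<delta>(1,2,3)])
    show "finite (Z 0)" using fin Z0 by simp
    show "poly P z = 0 \<and> poly Q z > 0" if "z \<in> Z 0" for z using that Q_pos unfolding Z0 by auto
    show "0 < poly (P + smult \<epsilon> Q) (z - \<delta>) * poly P (z - \<delta>) \<and>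
          0 < poly (P + smult \<epsilon> Q) (z + \<delta>) * poly P (z + \<delta>)" if "z \<in> Z 0" for z
      using keep[of \<epsilon>, OF _ ends_in_E(1)[OF that]] keep[of \<epsilon>, OF _ ends_in_E(2)[OF that]]
        \<open>\<bar>\<epsilon>\<bar> < e2\<close> unfolding e2_def by simp
    show "finite {t \<in> D. poly (P + smult \<epsilon> Q) t = 0}" using maxZ[OF that] unfolding Z_def by simp
  qed
  have "card (Z \<epsilon>) = N" if eps: "0 < \<epsilon>" "\<epsilon> < e2" for \<epsilon>
  proof -
    have "(\<Sum>z\<in>Z 0. root_count_lb P \<epsilon> (z - \<delta>) (z + \<delta>)) + (\<Sum>z\<in>Z 0. root_count_lb P (- \<epsilon>) (z - \<delta>) (z + \<delta>))
        = (\<Sum>z\<in>Z 0. 2)"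
      unfolding sum.distrib[symmetric]
    proof (rule sum.cong[OF refl])
      fix z assume "z \<in> Z 0"
      then have "poly P (z - \<delta>) \<noteq> 0" "poly P (z + \<delta>) \<noteq> 0" using E ends_in_E by blast+
      then show "root_count_lb P \<epsilon> (z - \<delta>) (z + \<delta>) + root_count_lb P (- \<epsilon>) (z - \<delta>) (z + \<delta>) = 2"
        using root_count_lb_reflect eps(1) by simp
    qed
    also have "\<dots> = 2 * N" using card Z0 by simp
    finally show ?thesis using lower[of \<epsilon>] lower[of "- \<epsilon>"] maxZ[of \<epsilon>] maxZ[of "- \<epsilon>"] eps by linarith
  qed
  moreover have "e2 > 0" using \<open>e > 0\<close> \<open>e1 > 0\<close> unfolding e2_def by simp
  ultimately show ?thesis using that unfolding Z_def by blast
qed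

lemma exists_perturbation_with_simple_roots:
  fixes P Q :: "real poly" and D :: "real set"
  assumes "open D" and Q_pos: "\<And>t. t \<in> D \<Longrightarrow> poly Q t > 0"
    and fin: "finite {t \<in> D. poly P t = 0}" and card: "card {t \<in> D. poly P t = 0} = N" and "N \<ge> 1"
    and "e > 0"
    and maximal: "\<And>\<epsilon>. \<bar>\<epsilon>\<bar> < e \<Longrightarrow> finite {t \<in> D. poly (P + smult \<epsilon> Q) t = 0} \<and>
                     card {t \<in> D. poly (P + smult \<epsilon> Q) t = 0} \<le> N"
    and "e' > 0"
  shows "\<exists>\<epsilon>. 0 < \<epsilon> \<and> \<epsilon> < e' \<and> card {t \<in> D. poly (P + smult \<epsilon> Q) t = 0} = N \<and>
           (\<forall>t\<in>D. poly (P + smult \<epsilon> Q) t = 0 \<longrightarrow> poly (pderiv (P + smult \<epsilon> Q)) t \<noteq> 0)"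
proof -
  obtain e2 where "e2 > 0" and card_eq: "\<And>\<epsilon>. 0 < \<epsilon> \<Longrightarrow> \<epsilon> < e2 \<Longrightarrow> card {t \<in> D. poly (P + smult \<epsilon> Q) t = 0} = N"
    using perturbation_keeps_root_count[OF assms(1,2) fin card \<open>e > 0\<close> maximal] by blast
  define Bad where "Bad = {\<epsilon>. \<exists>t\<in>D. poly (P + smult \<epsilon> Q) t = 0 \<and> poly (pderiv (P + smult \<epsilon> Q)) t = 0}"
  have "{t \<in> D. poly P t = 0} \<noteq> {}" using card \<open>N \<ge> 1\<close> by (metis card.empty not_one_le_zero)
  then have "finite Bad" unfolding Bad_def using finite_double_root_perturbations[OF assms(1) Q_pos _ _ fin] by blast
  moreover have "infinite {0<..<min e' e2}" using \<open>e' > 0\<close> \<open>e2 > 0\<close> by simp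
  ultimately have "\<not> {0<..<min e' e2} \<subseteq> Bad" using finite_subset by blast
  then obtain \<epsilon> where "\<epsilon> \<in> {0<..<min e' e2}" "\<epsilon> \<notin> Bad" by blast
  then show ?thesis using card_eq[of \<epsilon>] unfolding Bad_def by auto
qed

section \<open>One-dimensional networks\<close>

locale one_dim_network =
  fixes s m :: nat and \<alpha> \<beta> :: "nat \<Rightarrow> nat \<Rightarrow> nat"
  assumes network: "is_network s m \<alpha> \<beta>"
    and one_dim: "one_dim_stoich s m \<alpha> \<beta>"
    and a0: "Nm \<alpha> \<beta> 0 0 \<noteq> 0"
begin

abbreviation "a i \<equiv> Nm \<alpha> \<beta> i 0"

definition avec :: "nat \<Rightarrow> real" where "avec = (\<lambda>i. if i < s then a i else 0)"

lemma stoich_column_in_subspace: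
  assumes "j < m"
  shows "(\<lambda>i. if i < s then Nm \<alpha> \<beta> i j else 0) \<in> stoich_subspace s m \<alpha> \<beta>"
proof -
  have "\<And>i. (\<Sum>j'<m. Nm \<alpha> \<beta> i j' * (if j' = j then 1 else 0)) = Nm \<alpha> \<beta> i j"
    using assms by (simp add: if_distrib cong: if_cong)
  then show ?thesis unfolding stoich_subspace_def
    by (intro CollectI exI[of _ "\<lambda>j'. if j' = j then 1 else 0"]) auto
qed

lemma s_pos: "0 < s"
  using one_dim unfolding one_dim_stoich_def by auto

lemma one_dim_generator:
  obtains w where "\<exists>i<s. w i \<noteq> 0" "stoich_subspace s m \<alpha> \<beta> = {v. \<exists>t. v = (\<lambda>i. t * w i)}"
  using one_dim unfolding one_dim_stoich_def by blast

lemma m_pos: "0 < m"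
proof (rule ccontr)
  assume "\<not> 0 < m"
  obtain w where w: "\<exists>i<s. w i \<noteq> 0" "stoich_subspace s m \<alpha> \<beta> = {v. \<exists>t. v = (\<lambda>i. t * w i)}"
    by (rule one_dim_generator)
  have "w \<in> stoich_subspace s m \<alpha> \<beta>" using w(2) by (auto intro: exI[of _ 1])
  then show False using w(1) \<open>\<not> 0 < m\<close> unfolding stoich_subspace_def by (auto dest: fun_cong)
qed

lemma stoich_subspace_eq_span: "stoich_subspace s m \<alpha> \<beta> = {v. \<exists>t. v = (\<lambda>i. t * avec i)}"
proof -
  obtain w where w: "\<exists>i<s. w i \<noteq> 0" "stoich_subspace s m \<alpha> \<beta> = {v. \<exists>t. v = (\<lambda>i. t * w i)}"
    by (rule one_dim_generator)
  obtain t0 where t0: "avec = (\<lambda>i. t0 * w i)"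
    using stoich_column_in_subspace[OF m_pos] w(2) unfolding avec_def by auto
  have "t0 \<noteq> 0" using fun_cong[OF t0, of 0] s_pos a0 by (auto simp: avec_def)
  show ?thesis unfolding w(2) t0
  proof safe
    fix t show "\<exists>t'. (\<lambda>i. t * w i) = (\<lambda>i. t' * (t0 * w i))"
      using \<open>t0 \<noteq> 0\<close> by (intro exI[of _ "t / t0"]) auto
  next
    fix t show "\<exists>t'. (\<lambda>i. t * (t0 * w i)) = (\<lambda>i. t' * w i)"
      by (intro exI[of _ "t * t0"]) auto
  qed
qed

definition lam :: "nat \<Rightarrow> real" where "lam j = Nm \<alpha> \<beta> 0 j / a 0"

lemma Nm_eq_lam_a:
  assumes "i < s" "j < m"
  shows "Nm \<alpha> \<beta> i j = lam j * a i"
proof -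
  obtain t where t: "(\<lambda>i. if i < s then Nm \<alpha> \<beta> i j else 0) = (\<lambda>i. t * avec i)"
    using stoich_column_in_subspace[OF assms(2)] unfolding stoich_subspace_eq_span by blast
  have "Nm \<alpha> \<beta> i j = t * a i" "Nm \<alpha> \<beta> 0 j = t * a 0"
    using fun_cong[OF t, of i] fun_cong[OF t, of 0] assms(1) s_pos by (auto simp: avec_def)
  then show ?thesis unfolding lam_def using a0 by simp
qed

lemma lam_nonzero:
  assumes "j < m"
  shows "lam j \<noteq> 0"
proof
  assume "lam j = 0"
  obtain i where "i < s" "\<alpha> i j \<noteq> \<beta> i j" using network assms unfolding is_network_def by blast
  then have "Nm \<alpha> \<beta> i j \<noteq> 0" unfolding Nm_def by simp
  then show False using Nm_eq_lam_a[OF \<open>i<s\<close> assms] \<open>lam j = 0\<close> by simp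
qed

definition hfun :: "(nat \<Rightarrow> real) \<Rightarrow> (nat \<Rightarrow> real) \<Rightarrow> real" where
  "hfun \<kappa> x = (\<Sum>j<m. lam j * (\<kappa> j * (\<Prod>l<s. x l ^ \<alpha> l j)))"

lemma mass_action_eq: "i < s \<Longrightarrow> mass_action s m \<alpha> \<beta> \<kappa> x i = a i * hfun \<kappa> x"
  unfolding mass_action_def hfun_def sum_distrib_left
proof (rule sum.cong)
  fix j assume "i < s" "j \<in> {..<m}"
  then show "Nm \<alpha> \<beta> i j * (\<kappa> j * (\<Prod>l<s. x l ^ \<alpha> l j)) = a i * (lam j * (\<kappa> j * (\<Prod>l<s. x l ^ \<alpha> l j)))"
    using Nm_eq_lam_a[of i j] by simp
qed simp

definition dh :: "(nat \<Rightarrow> real) \<Rightarrow> (nat \<Rightarrow> real) \<Rightarrow> nat \<Rightarrow> real" where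
  "dh \<kappa> x k = (\<Sum>j<m. lam j * (\<kappa> j *
      (real (\<alpha> k j) * x k ^ (\<alpha> k j - 1) * (\<Prod>l\<in>{..<s} - {k}. x l ^ \<alpha> l j))))"

text \<open>With dh the gradient of hfun, the Jacobian is the rank-one matrix a dh^T (lemma jac_eq),
  so its only eigenvalue that can be nonzero is mu = dh . a.\<close>
definition mu :: "(nat \<Rightarrow> real) \<Rightarrow> (nat \<Rightarrow> real) \<Rightarrow> real" where
  "mu \<kappa> x = (\<Sum>k<s. dh \<kappa> x k * a k)"

lemma jac_eq:
  assumes "i < s"
  shows "jac s m \<alpha> \<beta> \<kappa> x i k = a i * dh \<kappa> x k"
  unfolding jac_def dh_def sum_distrib_left
proof (rule sum.cong)
  fix j assume "j \<in> {..<m}"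
  then show "Nm \<alpha> \<beta> i j * (\<kappa> j * (real (\<alpha> k j) * x k ^ (\<alpha> k j - 1) * (\<Prod>l\<in>{..<s} - {k}. x l ^ \<alpha> l j))) =
    a i * (lam j * (\<kappa> j * (real (\<alpha> k j) * x k ^ (\<alpha> k j - 1) * (\<Prod>l\<in>{..<s} - {k}. x l ^ \<alpha> l j))))"
    using Nm_eq_lam_a[OF assms, of j] by simp
qed simp

lemma jac_map_eq_dh: "jac_map s m \<alpha> \<beta> \<kappa> x v = (\<lambda>i. (\<Sum>k<s. dh \<kappa> x k * v k) * avec i)"
  unfolding jac_map_def avec_def
  by (auto simp: jac_eq sum_distrib_left mult_ac)

lemma avec_0_nonzero: "avec 0 \<noteq> 0" using a0 s_pos unfolding avec_def by simp

lemma jac_map_scale_avec: "jac_map s m \<alpha> \<beta> \<kappa> x (\<lambda>i. t * avec i) = (\<lambda>i. (t * mu \<kappa> x) * avec i)"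
proof -
  have "(\<Sum>k<s. dh \<kappa> x k * (t * avec k)) = t * mu \<kappa> x"
    unfolding mu_def sum_distrib_left by (rule sum.cong) (auto simp: avec_def)
  then show ?thesis unfolding jac_map_eq_dh by simp
qed

lemma nondegenerate_iff: "nondegenerate s m \<alpha> \<beta> \<kappa> x \<longleftrightarrow> mu \<kappa> x \<noteq> 0"
proof
  assume "nondegenerate s m \<alpha> \<beta> \<kappa> x"
  moreover have "avec \<in> stoich_subspace s m \<alpha> \<beta>" unfolding stoich_subspace_eq_span by (auto intro: exI[of _ 1])
  ultimately have "avec \<in> jac_map s m \<alpha> \<beta> \<kappa> x ` stoich_subspace s m \<alpha> \<beta>" unfolding nondegenerate_def by simp
  then obtain t where "avec = jac_map s m \<alpha> \<beta> \<kappa> x (\<lambda>i. t * avec i)"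
    unfolding stoich_subspace_eq_span by blast
  then have "avec 0 = (t * mu \<kappa> x) * avec 0" unfolding jac_map_scale_avec by metis
  then show "mu \<kappa> x \<noteq> 0" using avec_0_nonzero by auto
next
  assume "mu \<kappa> x \<noteq> 0"
  show "nondegenerate s m \<alpha> \<beta> \<kappa> x" unfolding nondegenerate_def
  proof (rule set_eqI, rule iffI)
    fix v assume "v \<in> jac_map s m \<alpha> \<beta> \<kappa> x ` stoich_subspace s m \<alpha> \<beta>"
    then show "v \<in> stoich_subspace s m \<alpha> \<beta>" unfolding stoich_subspace_eq_span using jac_map_scale_avec by auto
  next
    fix v assume "v \<in> stoich_subspace s m \<alpha> \<beta>"
    then obtain t where v: "v = (\<lambda>i. t * avec i)" unfolding stoich_subspace_eq_span by auto
    have "v = jac_map s m \<alpha> \<beta> \<kappa> x (\<lambda>i. (t / mu \<kappa> x) * avec i)"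
      unfolding jac_map_scale_avec v using \<open>mu \<kappa> x \<noteq> 0\<close> by simp
    then show "v \<in> jac_map s m \<alpha> \<beta> \<kappa> x ` stoich_subspace s m \<alpha> \<beta>" unfolding stoich_subspace_eq_span by blast
  qed
qed

lemma eigenvalue_eq_mu:
  assumes "is_eigenvalue s (jac s m \<alpha> \<beta> \<kappa> x) z" "z \<noteq> 0"
  shows "z = complex_of_real (mu \<kappa> x)"
proof -
  obtain v where v: "\<exists>i<s. v i \<noteq> 0"
     "\<forall>i<s. (\<Sum>k<s. complex_of_real (jac s m \<alpha> \<beta> \<kappa> x i k) * v k) = z * v i"
    using assms(1) unfolding is_eigenvalue_def by blast
  define w where "w = (\<Sum>k<s. complex_of_real (dh \<kappa> x k) * v k)"
  have vi: "v i = complex_of_real (a i) * w / z" if "i < s" for i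
  proof -
    have "(\<Sum>k<s. complex_of_real (jac s m \<alpha> \<beta> \<kappa> x i k) * v k) = complex_of_real (a i) * w"
      unfolding w_def sum_distrib_left by (rule sum.cong) (auto simp: jac_eq[OF that])
    then have "z * v i = complex_of_real (a i) * w" using v(2) that by simp
    then show ?thesis using assms(2) by (simp add: eq_divide_eq mult.commute)
  qed
  have "w \<noteq> 0" using v(1) vi by auto
  have "w = (\<Sum>k<s. complex_of_real (dh \<kappa> x k) * (complex_of_real (a k) * w / z))"
  proof -
    have "w = (\<Sum>k<s. complex_of_real (dh \<kappa> x k) * v k)" by (simp add: w_def)
    also have "\<dots> = (\<Sum>k<s. complex_of_real (dh \<kappa> x k) * (complex_of_real (a k) * w / z))"
      by (rule sum.cong) (auto simp: vi)
    finally show ?thesis .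
  qed
  also have "\<dots> = complex_of_real (mu \<kappa> x) * w / z"
  proof -
    have "complex_of_real (mu \<kappa> x) * w / z = (\<Sum>k<s. complex_of_real (dh \<kappa> x k * a k) * w / z)"
      unfolding mu_def of_real_sum sum_distrib_right sum_divide_distrib ..
    then show ?thesis by (simp add: mult.assoc)
  qed
  finally have "w * z = complex_of_real (mu \<kappa> x) * w" using assms(2) by (simp add: eq_divide_eq)
  then show ?thesis using \<open>w \<noteq> 0\<close> by (simp add: mult.commute)
qed

lemma is_eigenvalue_mu: "is_eigenvalue s (jac s m \<alpha> \<beta> \<kappa> x) (complex_of_real (mu \<kappa> x))"
  unfolding is_eigenvalue_def
proof (intro exI[of _ "\<lambda>i. complex_of_real (avec i)"] conjI allI impI)
  show "\<exists>i<s. complex_of_real (avec i) \<noteq> 0" using avec_0_nonzero s_pos by auto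
  fix i assume "i < s"
  have "(\<Sum>k<s. complex_of_real (jac s m \<alpha> \<beta> \<kappa> x i k) * complex_of_real (avec k))
        = complex_of_real (a i) * complex_of_real (mu \<kappa> x)"
    unfolding mu_def of_real_sum sum_distrib_left
    by (rule sum.cong) (auto simp: jac_eq[OF \<open>i<s\<close>] avec_def)
  then show "(\<Sum>k<s. complex_of_real (jac s m \<alpha> \<beta> \<kappa> x i k) * complex_of_real (avec k)) =
         complex_of_real (mu \<kappa> x) * complex_of_real (avec i)"
    using \<open>i<s\<close> by (simp add: avec_def mult.commute)
qed

lemma stable_iff_mu_neg: "stable s m \<alpha> \<beta> \<kappa> x \<longleftrightarrow> mu \<kappa> x < 0"
proof
  assume st: "stable s m \<alpha> \<beta> \<kappa> x"
  then have "mu \<kappa> x \<noteq> 0" unfolding stable_def nondegenerate_iff by simp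
  then show "mu \<kappa> x < 0" using st is_eigenvalue_mu unfolding stable_def by force
next
  assume "mu \<kappa> x < 0"
  then show "stable s m \<alpha> \<beta> \<kappa> x" unfolding stable_def nondegenerate_iff
    using eigenvalue_eq_mu by fastforce
qed

section \<open>Parametrising a compatibility class by the pivot coordinate\<close>

abbreviation "Ac p i \<equiv> Acoef \<alpha> \<beta> p i"
abbreviation "Bc p c i \<equiv> Bcoef \<alpha> \<beta> p c i"

definition param :: "nat \<Rightarrow> (nat \<Rightarrow> real) \<Rightarrow> real \<Rightarrow> nat \<Rightarrow> real" where
  "param p c t = (\<lambda>i. if i < s then Ac p i * t + Bc p c i else 0)"

definition pdom :: "nat \<Rightarrow> (nat \<Rightarrow> real) \<Rightarrow> real set" where
  "pdom p c = {t. \<forall>i<s. 0 < Ac p i * t + Bc p c i}"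

definition reactant_poly :: "nat \<Rightarrow> (nat \<Rightarrow> real) \<Rightarrow> nat \<Rightarrow> real poly" where
  "reactant_poly p c j = (\<Prod>l<s. [:Bc p c l, Ac p l:] ^ \<alpha> l j)"

definition ss_poly :: "nat \<Rightarrow> (nat \<Rightarrow> real) \<Rightarrow> (nat \<Rightarrow> real) \<Rightarrow> real poly" where
  "ss_poly p \<kappa> c = (\<Sum>j<m. smult (Nm \<alpha> \<beta> p j * \<kappa> j) (reactant_poly p c j))"

definition ss_roots :: "nat \<Rightarrow> (nat \<Rightarrow> real) \<Rightarrow> (nat \<Rightarrow> real) \<Rightarrow> real set" where
  "ss_roots p \<kappa> c = {t \<in> pdom p c. poly (ss_poly p \<kappa> c) t = 0}"

lemma Ac_self: "a p \<noteq> 0 \<Longrightarrow> Ac p p = 1"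
  by (simp add: Acoef_def)

lemma Bc_self: "Bc p c p = 0"
  by (simp add: Bcoef_def)

lemma param_pivot: "p < s \<Longrightarrow> a p \<noteq> 0 \<Longrightarrow> param p c t p = t"
  by (simp add: param_def Ac_self Bc_self)

lemma inj_param: "p < s \<Longrightarrow> a p \<noteq> 0 \<Longrightarrow> inj (param p c)"
  by (metis param_pivot injI)

lemma poly_reactant_poly: "poly (reactant_poly p c j) t = (\<Prod>l<s. param p c t l ^ \<alpha> l j)"
  unfolding reactant_poly_def poly_prod by (rule prod.cong) (auto simp: param_def poly_power algebra_simps)

lemma poly_ss_poly: "poly (ss_poly p \<kappa> c) t = mass_action s m \<alpha> \<beta> \<kappa> (param p c t) p"
  unfolding ss_poly_def mass_action_def poly_sum by (simp add: poly_reactant_poly mult.assoc)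

lemma param_eq_iff:
  assumes "p < s" "a p \<noteq> 0"
  shows "x = param p c (x p) \<longleftrightarrow>
    (\<forall>i. s \<le> i \<longrightarrow> x i = 0) \<and> (\<forall>i<s. i \<noteq> p \<longrightarrow> x i = Ac p i * x p + Bc p c i)"
  using assms unfolding fun_eq_iff param_def by (auto simp: Ac_self Bc_self not_less)

lemma compat_class_iff_param:
  assumes "p < s" "a p \<noteq> 0"
  shows "x \<in> compat_class s m \<alpha> \<beta> p c \<longleftrightarrow> x = param p c (x p) \<and> (\<forall>i<s. 0 \<le> x i)"
proof -
  have "a i * x p - a p * x i = c i \<longleftrightarrow> x i = Ac p i * x p + Bc p c i" if "i \<noteq> p" for i
    using assms(2) that unfolding Acoef_def Bcoef_def by (auto simp: field_simps)
  then show ?thesis unfolding compat_class_def param_eq_iff[OF assms] by auto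
qed

lemma pos_ss_eq_image:
  assumes "p < s" "a p \<noteq> 0"
  shows "pos_ss s m \<alpha> \<beta> p \<kappa> c = param p c ` ss_roots p \<kappa> c"
proof (rule set_eqI)
  fix x
  have st: "(\<forall>i<s. mass_action s m \<alpha> \<beta> \<kappa> y i = 0) \<longleftrightarrow> mass_action s m \<alpha> \<beta> \<kappa> y p = 0" for y
    using assms mass_action_eq by auto
  show "x \<in> pos_ss s m \<alpha> \<beta> p \<kappa> c \<longleftrightarrow> x \<in> param p c ` ss_roots p \<kappa> c"
  proof
    assume "x \<in> pos_ss s m \<alpha> \<beta> p \<kappa> c"
    then have x: "x = param p c (x p)" "\<forall>i<s. 0 < x i" "mass_action s m \<alpha> \<beta> \<kappa> x p = 0"
      unfolding pos_ss_def compat_class_iff_param[OF assms] using st by auto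
    have "0 < Ac p i * x p + Bc p c i" if "i < s" for i
    proof -
      have "x i = Ac p i * x p + Bc p c i" using fun_cong[OF x(1), of i] that unfolding param_def by simp
      then show ?thesis using x(2) that by force
    qed
    moreover have "mass_action s m \<alpha> \<beta> \<kappa> (param p c (x p)) p = 0" using x(3) x(1) by simp
    ultimately have "x p \<in> ss_roots p \<kappa> c" unfolding ss_roots_def pdom_def poly_ss_poly by blast
    then show "x \<in> param p c ` ss_roots p \<kappa> c" using x(1) by blast
  next
    assume "x \<in> param p c ` ss_roots p \<kappa> c"
    then obtain t where t: "t \<in> ss_roots p \<kappa> c" "x = param p c t" by blast
    have xp: "x p = t" using t param_pivot assms by simp
    have "\<forall>i<s. 0 < param p c t i" using t unfolding ss_roots_def pdom_def param_def by simp
    moreover have "mass_action s m \<alpha> \<beta> \<kappa> (param p c t) p = 0" using t unfolding ss_roots_def poly_ss_poly by simp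
    ultimately show "x \<in> pos_ss s m \<alpha> \<beta> p \<kappa> c" unfolding pos_ss_def compat_class_iff_param[OF assms] xp st
      using t(2) assms by (auto simp: less_imp_le param_pivot)
  qed
qed

lemma poly_pderiv_ss_poly:
  assumes "a p \<noteq> 0" "p < s"
  shows "poly (pderiv (ss_poly p \<kappa> c)) t = mu \<kappa> (param p c t)"
proof -
  let ?x = "param p c t"
  have dq: "poly (pderiv (reactant_poly p c j)) t =
     (\<Sum>k<s. (\<Prod>l\<in>{..<s} - {k}. ?x l ^ \<alpha> l j) * (real (\<alpha> k j) * ?x k ^ (\<alpha> k j - 1) * Ac p k))" for j
    unfolding reactant_poly_def pderiv_prod poly_sum
    by (rule sum.cong) (auto simp: poly_prod pderiv_power pderiv_pCons poly_power param_def algebra_simps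
        intro!: prod.cong)
  have "poly (pderiv (ss_poly p \<kappa> c)) t = (\<Sum>j<m. Nm \<alpha> \<beta> p j * \<kappa> j *
     (\<Sum>k<s. (\<Prod>l\<in>{..<s} - {k}. ?x l ^ \<alpha> l j) * (real (\<alpha> k j) * ?x k ^ (\<alpha> k j - 1) * Ac p k)))"
    unfolding ss_poly_def pderiv_sum pderiv_smult poly_sum poly_smult dq ..
  also have "\<dots> = (\<Sum>j<m. \<Sum>k<s. lam j * (\<kappa> j *
      (real (\<alpha> k j) * ?x k ^ (\<alpha> k j - 1) * (\<Prod>l\<in>{..<s} - {k}. ?x l ^ \<alpha> l j))) * a k)"
    unfolding sum_distrib_left
  proof (intro sum.cong refl)
    fix j k assume "j \<in> {..<m}" "k \<in> {..<s}"
    then have "Nm \<alpha> \<beta> p j = lam j * a p" using Nm_eq_lam_a[of p j] assms by simp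
    then show "Nm \<alpha> \<beta> p j * \<kappa> j * ((\<Prod>l\<in>{..<s} - {k}. ?x l ^ \<alpha> l j) * (real (\<alpha> k j) * ?x k ^ (\<alpha> k j - 1) * Ac p k)) =
      lam j * (\<kappa> j * (real (\<alpha> k j) * ?x k ^ (\<alpha> k j - 1) * (\<Prod>l\<in>{..<s} - {k}. ?x l ^ \<alpha> l j))) * a k"
      using assms(1) by (simp add: Acoef_def field_simps)
  qed
  also have "\<dots> = mu \<kappa> ?x"
    unfolding mu_def dh_def sum_distrib_right by (rule sum.swap)
  finally show ?thesis .
qed

lemma stab_ss_eq_image:
  assumes "p < s" "a p \<noteq> 0"
  shows "stab_ss s m \<alpha> \<beta> p \<kappa> c = param p c ` {t \<in> ss_roots p \<kappa> c. poly (pderiv (ss_poly p \<kappa> c)) t < 0}"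
  unfolding stab_ss_def pos_ss_eq_image[OF assms] stable_iff_mu_neg poly_pderiv_ss_poly[OF assms(2,1)] by blast

definition c_ext :: "nat \<Rightarrow> (nat \<Rightarrow> real) \<Rightarrow> nat \<Rightarrow> real" where
  "c_ext p c i = (if i = p then 0 else c i)"

definition change_pivot :: "nat \<Rightarrow> nat \<Rightarrow> (nat \<Rightarrow> real) \<Rightarrow> nat \<Rightarrow> real" where
  "change_pivot p q c i = (a q * c_ext p c i - a i * c_ext p c q) / a p"

lemma compat_class_iff_c_ext:
  "x \<in> compat_class s m \<alpha> \<beta> p c \<longleftrightarrow> (\<forall>i<s. x i \<ge> 0) \<and> (\<forall>i. s \<le> i \<longrightarrow> x i = 0) \<and>
      (\<forall>i<s. a i * x p - a p * x i = c_ext p c i)"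
  unfolding compat_class_def c_ext_def by auto

lemma c_ext_change_pivot_iff:
  assumes "p < s" "q < s" "a p \<noteq> 0" "a q \<noteq> 0"
  shows "(\<forall>i<s. a i * x p - a p * x i = c_ext p c i) \<longleftrightarrow>
    (\<forall>i<s. a i * x q - a q * x i = c_ext q (change_pivot p q c) i)"
proof -
  have c_ext_q: "c_ext q (change_pivot p q c) i = change_pivot p q c i" for i
    unfolding c_ext_def change_pivot_def by auto
  show ?thesis unfolding c_ext_q
  proof (intro iffI allI impI)
    fix i assume h: "\<forall>i<s. a i * x p - a p * x i = c_ext p c i" and "i < s"
    show "a i * x q - a q * x i = change_pivot p q c i"
      unfolding change_pivot_def by (rule change_pivot_identity[OF assms(3)]) (use h \<open>i < s\<close> assms in auto)
  next
    fix i assume h: "\<forall>i<s. a i * x q - a q * x i = change_pivot p q c i" and "i < s"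
    have hp: "a p * x q - a q * x p = - c_ext p c q"
      using h[rule_format, OF assms(1)] assms(3) unfolding change_pivot_def by (simp add: c_ext_def)
    show "a i * x p - a p * x i = c_ext p c i"
      by (rule change_pivot_identity_back[OF assms(4) h[rule_format, OF \<open>i < s\<close>] _ hp])
        (use assms(3) in \<open>simp add: change_pivot_def\<close>)
  qed
qed

lemma compat_class_change_pivot:
  assumes "p < s" "q < s" "a p \<noteq> 0" "a q \<noteq> 0"
  shows "compat_class s m \<alpha> \<beta> p c = compat_class s m \<alpha> \<beta> q (change_pivot p q c)"
  unfolding set_eq_iff compat_class_iff_c_ext c_ext_change_pivot_iff[OF assms] by blast

lemma pos_ss_change_pivot:
  assumes "p < s" "q < s" "a p \<noteq> 0" "a q \<noteq> 0"
  shows "pos_ss s m \<alpha> \<beta> p \<kappa> c = pos_ss s m \<alpha> \<beta> q \<kappa> (change_pivot p q c)"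
  unfolding pos_ss_def compat_class_change_pivot[OF assms] ..

lemma stab_ss_change_pivot:
  assumes "p < s" "q < s" "a p \<noteq> 0" "a q \<noteq> 0"
  shows "stab_ss s m \<alpha> \<beta> p \<kappa> c = stab_ss s m \<alpha> \<beta> q \<kappa> (change_pivot p q c)"
  unfolding stab_ss_def pos_ss_change_pivot[OF assms] ..

lemma ecard_pos_ss_le_cap_pos:
  assumes "p < s" "a p \<noteq> 0" "rate_vec m \<kappa>"
  shows "ecard (pos_ss s m \<alpha> \<beta> p \<kappa> c) \<le> cap_pos s m \<alpha> \<beta>"
proof -
  have "pos_ss s m \<alpha> \<beta> p \<kappa> c = pos_ss s m \<alpha> \<beta> 0 \<kappa> (change_pivot p 0 c)"
    using pos_ss_change_pivot[OF assms(1) s_pos assms(2) a0] .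
  then show ?thesis unfolding cap_pos_def using assms(3) by (auto intro!: Sup_upper)
qed

lemma pdom_eq_INT: "pdom p c = (\<Inter>i<s. {t. 0 < Ac p i * t + Bc p c i})"
  unfolding pdom_def by auto

lemma open_pdom: "open (pdom p c)"
  unfolding pdom_eq_INT by (intro open_INT ballI open_Collect_less continuous_intros) auto

lemma pdom_between:
  assumes "x \<in> pdom p c" "y \<in> pdom p c" "x \<le> z" "z \<le> y"
  shows "z \<in> pdom p c"
  unfolding pdom_def
proof (intro CollectI allI impI)
  fix i assume "i < s"
  then have "0 < Ac p i * x + Bc p c i" "0 < Ac p i * y + Bc p c i" using assms(1,2) unfolding pdom_def by auto
  moreover have "Ac p i * x \<le> Ac p i * z \<or> Ac p i * y \<le> Ac p i * z"
    using assms(3,4) mult_left_mono[of x z "Ac p i"] mult_left_mono_neg[of z y "Ac p i"] by linarith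
  ultimately show "0 < Ac p i * z + Bc p c i" by linarith
qed

section \<open>Species classes and the reduced polynomial\<close>

abbreviation "J p \<equiv> Jset s \<alpha> \<beta> p"
abbreviation "CL p c i \<equiv> cls s \<alpha> \<beta> p c i"
abbreviation "HS p c \<equiv> Hset s m \<alpha> \<beta> p c"
abbreviation "\<gamma> p c k j \<equiv> gam s m \<alpha> \<beta> p c k j"
abbreviation "\<phi> p c k \<equiv> phi s m \<alpha> \<beta> p c k"

definition rep :: "nat \<Rightarrow> (nat \<Rightarrow> real) \<Rightarrow> nat \<Rightarrow> nat" where
  "rep p c i = (if p \<in> CL p c i then p else Min (CL p c i))"

definition reps :: "nat \<Rightarrow> (nat \<Rightarrow> real) \<Rightarrow> nat set" where
  "reps p c = {k. is_rep s \<alpha> \<beta> p c k} \<inter> J p"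

definition ratio :: "nat \<Rightarrow> (nat \<Rightarrow> real) \<Rightarrow> nat \<Rightarrow> real" where
  "ratio p c i = Bc p c i / Ac p i"

lemma Jset_subset: "J p \<subseteq> {..<s}" unfolding Jset_def by auto

lemma finite_Jset: "finite (J p)" by (rule finite_subset[OF Jset_subset]) simp

lemma cls_Jset: "i \<in> J p \<Longrightarrow> CL p c i = {k \<in> J p. ratio p c k = ratio p c i}"
  unfolding cls_def Jset_def ratio_def by auto

lemma cls_not_Jset: "i < s \<Longrightarrow> i \<notin> J p \<Longrightarrow> CL p c i = {..<s} - J p"
  unfolding cls_def Jset_def by auto

lemma cls_subset: "CL p c i \<subseteq> {..<s}" unfolding cls_def by (simp add: subset_eq)

lemma finite_cls: "finite (CL p c i)" by (rule finite_subset[OF cls_subset]) simp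

lemma cls_self: "i < s \<Longrightarrow> i \<in> CL p c i"
  unfolding cls_def by simp

lemma cls_of_member:
  assumes "i < s" "k \<in> CL p c i"
  shows "CL p c k = CL p c i"
proof (cases "i \<in> J p")
  case True
  have ci: "CL p c i = {k \<in> J p. ratio p c k = ratio p c i}" using cls_Jset[OF True] .
  then have k: "k \<in> J p" "ratio p c k = ratio p c i" using assms(2) by blast+
  have "CL p c k = {k' \<in> J p. ratio p c k' = ratio p c k}" using cls_Jset[OF k(1)] .
  then show ?thesis using ci k(2) by simp
next
  case False
  have ci: "CL p c i = {..<s} - J p" using cls_not_Jset[OF assms(1) False] .
  then have k: "k < s" "k \<notin> J p" using assms(2) by blast+
  show ?thesis using cls_not_Jset[OF k] ci by simp
qed

lemma rep_in:
  assumes "i < s"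
  shows "rep p c i \<in> CL p c i"
proof (cases "p \<in> CL p c i")
  case True then show ?thesis by (simp add: rep_def)
next
  case False
  have "CL p c i \<noteq> {}" using cls_self[OF assms] by blast
  then have "Min (CL p c i) \<in> CL p c i" using finite_cls by (rule Min_in[rotated])
  then show ?thesis using False by (simp add: rep_def)
qed

lemma rep_lt:
  assumes "i < s"
  shows "rep p c i < s"
proof -
  have "rep p c i \<in> CL p c i" by (rule rep_in[OF assms])
  then show ?thesis using cls_subset[of p c i] by (simp add: subset_eq)
qed

lemma cls_rep:
  assumes "i < s"
  shows "CL p c (rep p c i) = CL p c i"
  by (rule cls_of_member[OF assms rep_in[OF assms]])

lemma is_rep_iff: "is_rep s \<alpha> \<beta> p c k \<longleftrightarrow> k < s \<and> rep p c k = k"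
  unfolding is_rep_def rep_def by auto

lemma is_rep_rep:
  assumes "i < s"
  shows "is_rep s \<alpha> \<beta> p c (rep p c i)"
proof -
  have "rep p c (rep p c i) = rep p c i" unfolding rep_def[of p c "rep p c i"] cls_rep[OF assms]
    by (simp add: rep_def)
  then show ?thesis unfolding is_rep_iff using rep_lt[OF assms] by simp
qed

lemma rep_unique:
  assumes "is_rep s \<alpha> \<beta> p c k" "is_rep s \<alpha> \<beta> p c k'" "i \<in> CL p c k" "i \<in> CL p c k'"
  shows "k = k'"
proof -
  have kk: "k < s" "k' < s" "rep p c k = k" "rep p c k' = k'" using assms(1,2) unfolding is_rep_iff by auto
  have "CL p c i = CL p c k" by (rule cls_of_member[OF kk(1) assms(3)])
  moreover have "CL p c i = CL p c k'" by (rule cls_of_member[OF kk(2) assms(4)])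
  ultimately have "CL p c k = CL p c k'" by simp
  then have "rep p c k = rep p c k'" unfolding rep_def by simp
  then show ?thesis using kk by simp
qed

lemma cls_subset_Jset:
  assumes "k \<in> J p"
  shows "CL p c k \<subseteq> J p"
  using cls_Jset[OF assms] by blast

lemma Jset_eq_UN_cls: "J p = (\<Union>k\<in>reps p c. CL p c k)"
proof
  show "J p \<subseteq> (\<Union>k\<in>reps p c. CL p c k)"
  proof
    fix i assume i: "i \<in> J p"
    then have "i < s" using Jset_subset by blast
    have "rep p c i \<in> J p" using rep_in[OF \<open>i<s\<close>] cls_subset_Jset[OF i] by blast
    then have "rep p c i \<in> reps p c" unfolding reps_def using is_rep_rep[OF \<open>i<s\<close>] by blast
    moreover have "i \<in> CL p c (rep p c i)" using cls_rep[OF \<open>i<s\<close>] cls_self[OF \<open>i<s\<close>] by simp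
    ultimately show "i \<in> (\<Union>k\<in>reps p c. CL p c k)" by blast
  qed
next
  show "(\<Union>k\<in>reps p c. CL p c k) \<subseteq> J p"
  proof
    fix i assume "i \<in> (\<Union>k\<in>reps p c. CL p c k)"
    then obtain k where "k \<in> reps p c" "i \<in> CL p c k" by blast
    then show "i \<in> J p" using cls_subset_Jset[of k p c] unfolding reps_def by blast
  qed
qed

lemma cls_reps_disjoint:
  assumes "k \<in> reps p c" "k' \<in> reps p c" "k \<noteq> k'"
  shows "CL p c k \<inter> CL p c k' = {}"
proof (rule ccontr)
  assume "CL p c k \<inter> CL p c k' \<noteq> {}"
  then obtain i where "i \<in> CL p c k" "i \<in> CL p c k'" by blast
  then have "k = k'" using rep_unique[of p c k k' i] assms(1,2) unfolding reps_def by blast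
  then show False using assms(3) by simp
qed

lemma finite_reps: "finite (reps p c)"
  by (rule finite_subset[OF _ finite_Jset[of p]]) (auto simp: reps_def)

lemma Hset_subset_reps: "HS p c \<subseteq> reps p c"
  unfolding Hset_def reps_def by auto

lemma finite_Hset: "finite (HS p c)" using finite_subset[OF Hset_subset_reps finite_reps] .

lemma sum_phi_gam:
  assumes "j < m"
  shows "(\<Sum>i\<in>CL p c k. \<alpha> i j) = \<phi> p c k + \<gamma> p c k j"
proof -
  have "\<phi> p c k \<le> (\<Sum>i\<in>CL p c k. \<alpha> i j)"
    unfolding phi_def using assms by (intro Min_le) auto
  then show ?thesis unfolding gam_def by simp
qed

lemma exists_gam_zero: "\<exists>j<m. \<gamma> p c k j = 0"
proof -
  have ne: "{(\<Sum>i\<in>CL p c k. \<alpha> i j) | j. j < m} \<noteq> {}" using m_pos by auto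
  have fin: "finite {(\<Sum>i\<in>CL p c k. \<alpha> i j) | j. j < m}" by simp
  obtain j where "j < m" "\<phi> p c k = (\<Sum>i\<in>CL p c k. \<alpha> i j)"
    using Min_in[OF fin ne] unfolding phi_def by auto
  then show ?thesis unfolding gam_def by auto
qed

lemma gam_zero_if_notin_Hset:
  assumes "k \<in> reps p c" "k \<notin> HS p c" "j < m"
  shows "\<gamma> p c k j = 0"
proof -
  obtain j0 where "j0 < m" "\<gamma> p c k j0 = 0" using exists_gam_zero by blast
  moreover have "\<gamma> p c k j = \<gamma> p c k j0" using assms calculation(1) unfolding Hset_def reps_def by blast
  ultimately show ?thesis by simp
qed

lemma Acoef_nonzero: "i \<in> J p \<Longrightarrow> Ac p i \<noteq> 0" unfolding Jset_def by auto

text \<open>For i in J this is x_i / |A_i| = sgn A_i * (t + B_i / A_i); it depends only on the class of i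
  (lemma ncoord_eq_on_cls).\<close>
definition ncoord :: "nat \<Rightarrow> (nat \<Rightarrow> real) \<Rightarrow> real \<Rightarrow> nat \<Rightarrow> real" where
  "ncoord p c t i = (Ac p i * t + Bc p c i) / \<bar>Ac p i\<bar>"

lemma ncoord_eq_if_same_ratio:
  assumes "i \<in> J p" "k \<in> J p" "ratio p c i = ratio p c k" "Ac p i > 0 \<longleftrightarrow> Ac p k > 0"
  shows "ncoord p c t i = ncoord p c t k"
proof -
  have nz: "Ac p i \<noteq> 0" "Ac p k \<noteq> 0" using assms Acoef_nonzero by auto
  have "Ac p i / \<bar>Ac p i\<bar> = Ac p k / \<bar>Ac p k\<bar>"
  proof (cases "Ac p i > 0")
    case True
    then have "Ac p k > 0" using assms(4) by blast
    then show ?thesis using True by simp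
  next
    case False
    then have "Ac p i < 0" "Ac p k < 0" using assms(4) nz by linarith+
    then show ?thesis by simp
  qed
  moreover have "Bc p c i / Ac p i = Bc p c k / Ac p k" using assms(3) unfolding ratio_def .
  ultimately show ?thesis
    unfolding ncoord_def divide_abs_affine[OF nz(1), of t "Bc p c i"] divide_abs_affine[OF nz(2), of t "Bc p c k"] by simp
qed

lemma sign_Acoef_eq_if_same_ratio:
  assumes t0: "t0 \<in> pdom p c" and "i \<in> J p" "k \<in> J p" "ratio p c i = ratio p c k"
  shows "Ac p i > 0 \<longleftrightarrow> Ac p k > 0"
proof -
  have nz: "Ac p i \<noteq> 0" "Ac p k \<noteq> 0" using assms Acoef_nonzero by auto
  have "i < s" "k < s" using assms Jset_subset by auto
  then have pos: "0 < Ac p i * t0 + Bc p c i" "0 < Ac p k * t0 + Bc p c k" using t0 unfolding pdom_def by auto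
  have e: "Ac p i * t0 + Bc p c i = Ac p i * (t0 + ratio p c i)" "Ac p k * t0 + Bc p c k = Ac p k * (t0 + ratio p c k)"
    using nz unfolding ratio_def by (simp_all add: field_simps)
  have r: "ratio p c i = ratio p c k" by (rule assms(4))
  have "(Ac p i > 0 \<and> t0 + ratio p c i > 0) \<or> (Ac p i < 0 \<and> t0 + ratio p c i < 0)"
    using pos(1) e(1) nz(1) by (auto simp: zero_less_mult_iff)
  moreover have "(Ac p k > 0 \<and> t0 + ratio p c i > 0) \<or> (Ac p k < 0 \<and> t0 + ratio p c i < 0)"
    using pos(2) e(2) nz(2) r by (auto simp: zero_less_mult_iff)
  ultimately show ?thesis by linarith
qed

definition cst :: "nat \<Rightarrow> (nat \<Rightarrow> real) \<Rightarrow> nat \<Rightarrow> real" where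
  "cst p c j = (\<Prod>i\<in>J p. \<bar>Ac p i\<bar> ^ \<alpha> i j) * (\<Prod>i\<in>{..<s} - J p. Bc p c i ^ \<alpha> i j)"

definition nlin :: "nat \<Rightarrow> (nat \<Rightarrow> real) \<Rightarrow> nat \<Rightarrow> real poly" where
  "nlin p c k = [:Bc p c k / \<bar>Ac p k\<bar>, Ac p k / \<bar>Ac p k\<bar>:]"

definition red_poly :: "nat \<Rightarrow> (nat \<Rightarrow> real) \<Rightarrow> (nat \<Rightarrow> real) \<Rightarrow> real poly" where
  "red_poly p \<kappa> c = (\<Sum>j<m. smult (Nm \<alpha> \<beta> p j * \<kappa> j * cst p c j) (\<Prod>k\<in>HS p c. nlin p c k ^ \<gamma> p c k j))"

lemma poly_nlin: "poly (nlin p c k) t = ncoord p c t k"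
  unfolding nlin_def ncoord_def by (simp add: add_divide_distrib mult.commute)

lemma poly_red_poly: "poly (red_poly p \<kappa> c) t =
   (\<Sum>j<m. Nm \<alpha> \<beta> p j * \<kappa> j * cst p c j * (\<Prod>k\<in>HS p c. ncoord p c t k ^ \<gamma> p c k j))"
  unfolding red_poly_def poly_sum poly_smult poly_prod poly_power poly_nlin ..

definition red_term :: "nat \<Rightarrow> (nat \<Rightarrow> real) \<Rightarrow> real \<Rightarrow> nat \<Rightarrow> real" where
  "red_term p c t j = cst p c j * (\<Prod>k\<in>HS p c. ncoord p c t k ^ \<gamma> p c k j)"

lemma poly_red_poly_eq_sum: "poly (red_poly p \<kappa> c) t = (\<Sum>j<m. Nm \<alpha> \<beta> p j * \<kappa> j * red_term p c t j)"
  unfolding poly_red_poly red_term_def by (simp add: mult.assoc)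

lemma cst_pos:
  assumes "t0 \<in> pdom p c"
  shows "cst p c j > 0"
  unfolding cst_def
proof (rule mult_pos_pos; rule prod_pos; rule zero_less_power)
  fix i assume "i \<in> J p" then show "0 < \<bar>Ac p i\<bar>" using Acoef_nonzero by simp
next
  fix i assume i: "i \<in> {..<s} - J p"
  then have "Ac p i = 0" "i < s" unfolding Jset_def by auto
  then show "0 < Bc p c i" using assms unfolding pdom_def by force
qed

lemma prod_param_factor:
  fixes c' :: "nat \<Rightarrow> real"
  assumes "j < m"
    and not_J: "\<forall>i<s. i \<notin> J p \<longrightarrow> Bc p c' i = Bc p c i"
    and H: "\<forall>k\<in>HS p c. Bc p c' k = Bc p c k"
    and cls: "\<forall>k\<in>reps p c. \<forall>i\<in>CL p c k. ncoord p c' t i = ncoord p c' t k"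
  shows "(\<Prod>l<s. (Ac p l * t + Bc p c' l) ^ \<alpha> l j) =
    cst p c j * (\<Prod>k\<in>HS p c. ncoord p c t k ^ \<gamma> p c k j) * (\<Prod>k\<in>reps p c. ncoord p c' t k ^ \<phi> p c k)"
proof -
  define x where "x l = Ac p l * t + Bc p c' l" for l
  define g where "g = ncoord p c' t"
  have split_J: "(\<Prod>l<s. x l ^ \<alpha> l j) = (\<Prod>l\<in>{..<s} - J p. x l ^ \<alpha> l j) * (\<Prod>l\<in>J p. x l ^ \<alpha> l j)"
    by (rule prod.subset_diff[OF Jset_subset]) simp
  have outside_J: "(\<Prod>l\<in>{..<s} - J p. x l ^ \<alpha> l j) = (\<Prod>l\<in>{..<s} - J p. Bc p c l ^ \<alpha> l j)"
    by (rule prod.cong) (use not_J in \<open>auto simp: x_def Jset_def\<close>)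
  have inside_J: "(\<Prod>l\<in>J p. x l ^ \<alpha> l j) = (\<Prod>l\<in>J p. \<bar>Ac p l\<bar> ^ \<alpha> l j) * (\<Prod>l\<in>J p. g l ^ \<alpha> l j)"
    unfolding prod.distrib[symmetric]
    by (rule prod.cong) (auto simp: x_def g_def ncoord_def Acoef_nonzero power_mult_distrib[symmetric])
  have "(\<Prod>l\<in>J p. g l ^ \<alpha> l j) = (\<Prod>k\<in>reps p c. \<Prod>l\<in>CL p c k. g l ^ \<alpha> l j)"
    unfolding Jset_eq_UN_cls[of p c]
    by (rule prod.UNION_disjoint) (use finite_reps finite_cls cls_reps_disjoint in auto)
  also have "\<dots> = (\<Prod>k\<in>reps p c. g k ^ (\<Sum>l\<in>CL p c k. \<alpha> l j))"
    unfolding power_sum by (rule prod.cong[OF refl], rule prod.cong[OF refl]) (use cls in \<open>simp add: g_def\<close>)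
  also have "\<dots> = (\<Prod>k\<in>reps p c. g k ^ \<gamma> p c k j) * (\<Prod>k\<in>reps p c. g k ^ \<phi> p c k)"
    using sum_phi_gam[OF \<open>j < m\<close>] by (simp add: power_add prod.distrib mult.commute)
  also have "(\<Prod>k\<in>reps p c. g k ^ \<gamma> p c k j) = (\<Prod>k\<in>HS p c. g k ^ \<gamma> p c k j)"
    by (rule prod.mono_neutral_right[OF finite_reps Hset_subset_reps])
      (use gam_zero_if_notin_Hset \<open>j < m\<close> in auto)
  also have "\<dots> = (\<Prod>k\<in>HS p c. ncoord p c t k ^ \<gamma> p c k j)"
    by (rule prod.cong) (use H in \<open>simp_all add: g_def ncoord_def\<close>)
  finally have regroup: "(\<Prod>l\<in>J p. g l ^ \<alpha> l j) =
    (\<Prod>k\<in>HS p c. ncoord p c t k ^ \<gamma> p c k j) * (\<Prod>k\<in>reps p c. g k ^ \<phi> p c k)" .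
  show ?thesis
    unfolding x_def[symmetric] split_J outside_J inside_J regroup cst_def by (simp add: g_def mult_ac)
qed

lemma poly_ss_poly_factor:
  fixes c' :: "nat \<Rightarrow> real"
  assumes nJ: "\<forall>i<s. i \<notin> J p \<longrightarrow> Bc p c' i = Bc p c i"
    and Hs: "\<forall>k\<in>HS p c. Bc p c' k = Bc p c k"
    and cons: "\<forall>k\<in>reps p c. \<forall>i\<in>CL p c k. ncoord p c' t i = ncoord p c' t k"
  shows "poly (ss_poly p \<kappa> c') t = poly (red_poly p \<kappa> c) t *
    (\<Prod>k\<in>reps p c. ncoord p c' t k ^ \<phi> p c k)"
proof -
  let ?pos_factor = "\<Prod>k\<in>reps p c. ncoord p c' t k ^ \<phi> p c k"
  have "poly (ss_poly p \<kappa> c') t = (\<Sum>j<m. Nm \<alpha> \<beta> p j * \<kappa> j * (\<Prod>l<s. (Ac p l * t + Bc p c' l) ^ \<alpha> l j))"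
    unfolding ss_poly_def poly_sum poly_smult poly_reactant_poly by (simp add: param_def)
  also have "\<dots> = (\<Sum>j<m. Nm \<alpha> \<beta> p j * \<kappa> j * (cst p c j * (\<Prod>k\<in>HS p c. ncoord p c t k ^ \<gamma> p c k j) * ?pos_factor))"
    by (rule sum.cong[OF refl]) (simp add: prod_param_factor[OF _ nJ Hs cons])
  also have "\<dots> = poly (red_poly p \<kappa> c) t * ?pos_factor"
    unfolding poly_red_poly sum_distrib_right by (rule sum.cong[OF refl]) (simp add: mult_ac)
  finally show ?thesis .
qed

definition pos_factor :: "nat \<Rightarrow> (nat \<Rightarrow> real) \<Rightarrow> real \<Rightarrow> real" where
  "pos_factor p c t = (\<Prod>k\<in>reps p c. ncoord p c t k ^ \<phi> p c k)"

lemma reps_less: "k \<in> reps p c \<Longrightarrow> k < s" unfolding reps_def using Jset_subset by blast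

lemma pos_factor_pos:
  assumes "t \<in> pdom p c"
  shows "pos_factor p c t > 0"
  unfolding pos_factor_def
proof (rule prod_pos, rule zero_less_power)
  fix k assume k: "k \<in> reps p c"
  then have "k < s" "k \<in> J p" using reps_less unfolding reps_def by auto
  then have "0 < Ac p k * t + Bc p c k" "Ac p k \<noteq> 0" using assms Acoef_nonzero unfolding pdom_def by auto
  then show "0 < ncoord p c t k" by (simp add: ncoord_def)
qed

lemma ncoord_eq_on_cls:
  assumes t0: "t0 \<in> pdom p c" and k: "k \<in> reps p c" and i: "i \<in> CL p c k"
  shows "ncoord p c t i = ncoord p c t k"
proof -
  have kJ: "k \<in> J p" using k unfolding reps_def by blast
  have ci: "CL p c k = {k' \<in> J p. ratio p c k' = ratio p c k}" by (rule cls_Jset[OF kJ])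
  then have iJ: "i \<in> J p" "ratio p c i = ratio p c k" using i by blast+
  show ?thesis by (rule ncoord_eq_if_same_ratio[OF iJ(1) kJ iJ(2) sign_Acoef_eq_if_same_ratio[OF t0 iJ(1) kJ iJ(2)]])
qed

lemma poly_ss_poly_eq:
  assumes "t \<in> pdom p c"
  shows "poly (ss_poly p \<kappa> c) t = poly (red_poly p \<kappa> c) t * pos_factor p c t"
  unfolding pos_factor_def
proof (rule poly_ss_poly_factor)
  show "\<forall>k\<in>reps p c. \<forall>i\<in>CL p c k. ncoord p c t i = ncoord p c t k"
    using ncoord_eq_on_cls[OF assms] by blast
qed auto

lemma ss_poly_root_iff_red_poly_root:
  assumes "t \<in> pdom p c"
  shows "poly (ss_poly p \<kappa> c) t = 0 \<longleftrightarrow> poly (red_poly p \<kappa> c) t = 0"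
  using poly_ss_poly_eq[OF assms, of \<kappa>] pos_factor_pos[OF assms] by simp

section \<open>The left endpoint of I and the set B\<close>

abbreviation "IS p c \<equiv> Iset s m \<alpha> \<beta> p c"

text \<open>The parameter at which the k-th coordinate of param p c vanishes; for k = tau it is the left
  endpoint of the interval I.\<close>
abbreviation "coord_zero p c k \<equiv> - Bc p c k / Ac p k"

lemma is_tauD:
  assumes "is_tau s m \<alpha> \<beta> p c tau"
  shows "tau \<in> HS p c" "Ac p tau > 0" "IS p c \<noteq> {}" "bdd_below (IS p c)"
    "Inf (IS p c) = coord_zero p c tau" "tau < s" "tau \<in> J p" "tau \<in> reps p c"
proof -
  show h: "tau \<in> HS p c" "Ac p tau > 0" "IS p c \<noteq> {}" "bdd_below (IS p c)"
    "Inf (IS p c) = coord_zero p c tau" using assms unfolding is_tau_def by auto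
  show "tau \<in> reps p c" using h(1) Hset_subset_reps by blast
  then show "tau < s" "tau \<in> J p" using reps_less unfolding reps_def by auto
qed

lemma tau_endpoint_ge:
  assumes tau: "is_tau s m \<alpha> \<beta> p c tau" and k: "k \<in> HS p c" "Ac p k > 0"
  shows "coord_zero p c k \<le> coord_zero p c tau"
proof -
  have "\<forall>y\<in>IS p c. coord_zero p c k \<le> y"
  proof
    fix y assume "y \<in> IS p c"
    then have "y \<in> Iint \<alpha> \<beta> p c k" unfolding Iset_def using k(1) by blast
    then show "coord_zero p c k \<le> y" unfolding Iint_def using k(2) by simp
  qed
  then have "coord_zero p c k \<le> Inf (IS p c)" using is_tauD(3)[OF tau] by (intro cInf_greatest) auto
  then show ?thesis using is_tauD(5)[OF tau] by simp
qed

lemma tau_endpoint_less_pdom: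
  assumes tau: "is_tau s m \<alpha> \<beta> p c tau" and t: "t \<in> pdom p c"
  shows "coord_zero p c tau < t"
proof -
  have "0 < Ac p tau * t + Bc p c tau" using t is_tauD(6)[OF tau] unfolding pdom_def by blast
  then show ?thesis using is_tauD(2)[OF tau] by (simp add: field_simps)
qed

lemma ncoord_pos_at_tau_endpoint:
  assumes tau: "is_tau s m \<alpha> \<beta> p c tau" and t0: "t0 \<in> pdom p c"
    and k: "k \<in> HS p c" "k \<noteq> tau"
  shows "0 < ncoord p c (coord_zero p c tau) k"
proof -
  define L where "L = coord_zero p c tau"
  have kR: "k \<in> reps p c" using k(1) Hset_subset_reps by blast
  then have kJ: "k \<in> J p" and ks: "k < s" and kr: "is_rep s \<alpha> \<beta> p c k"
    using reps_less unfolding reps_def by auto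
  have nz: "Ac p k \<noteq> 0" using Acoef_nonzero[OF kJ] .
  have "0 < Ac p k * L + Bc p c k"
  proof (cases "Ac p k > 0")
    case True
    have le: "coord_zero p c k \<le> L" using tau_endpoint_ge[OF tau k(1) True] unfolding L_def .
    have ne: "coord_zero p c k \<noteq> L"
    proof
      assume eq: "coord_zero p c k = L"
      have "ratio p c k = ratio p c tau" using eq unfolding L_def ratio_def by (simp add: minus_divide_left[symmetric])
      then have "k \<in> CL p c tau" using cls_Jset[OF is_tauD(7)[OF tau]] kJ by blast
      moreover have "k \<in> CL p c k" using cls_self[OF ks] .
      moreover have "is_rep s \<alpha> \<beta> p c tau" using is_tauD(8)[OF tau] unfolding reps_def by blast
      ultimately have "k = tau" using rep_unique[OF kr] by blast
      then show False using k(2) by simp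
    qed
    have "coord_zero p c k < L" using le ne by linarith
    then show ?thesis using True by (simp add: field_simps)
  next
    case False
    then have neg: "Ac p k < 0" using nz by linarith
    have "L < t0" using tau_endpoint_less_pdom[OF tau t0] unfolding L_def .
    then have "Ac p k * t0 < Ac p k * L" using neg by (simp add: mult_less_cancel_left_neg)
    moreover have "0 < Ac p k * t0 + Bc p c k" using t0 ks unfolding pdom_def by blast
    ultimately show ?thesis by linarith
  qed
  then show ?thesis unfolding L_def ncoord_def using nz by simp
qed

lemma red_term_tau_endpoint_eq:
  assumes tau: "is_tau s m \<alpha> \<beta> p c tau" and "j < m"
  shows "red_term p c (coord_zero p c tau) j = (if j \<in> Lset s m \<alpha> \<beta> p c tau
    then cst p c j * (\<Prod>k\<in>HS p c - {tau}. ncoord p c (coord_zero p c tau) k ^ \<gamma> p c k j) else 0)"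
proof -
  have "ncoord p c (coord_zero p c tau) tau = 0" using is_tauD(2)[OF tau] by (simp add: ncoord_def)
  then show ?thesis
    using \<open>j < m\<close> unfolding red_term_def Lset_def prod.remove[OF finite_Hset is_tauD(1)[OF tau]] by auto
qed

lemma red_term_tau_endpoint:
  assumes tau: "is_tau s m \<alpha> \<beta> p c tau" and t0: "t0 \<in> pdom p c"
  shows "j \<in> Lset s m \<alpha> \<beta> p c tau \<Longrightarrow> red_term p c (coord_zero p c tau) j > 0"
    and "j \<notin> Lset s m \<alpha> \<beta> p c tau \<Longrightarrow> j < m \<Longrightarrow> red_term p c (coord_zero p c tau) j = 0"
proof -
  assume j: "j \<in> Lset s m \<alpha> \<beta> p c tau"
  have "(\<Prod>k\<in>HS p c - {tau}. ncoord p c (coord_zero p c tau) k ^ \<gamma> p c k j) > 0"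
    using ncoord_pos_at_tau_endpoint[OF tau t0] by (intro prod_pos zero_less_power) auto
  then show "red_term p c (coord_zero p c tau) j > 0"
    using j red_term_tau_endpoint_eq[OF tau] cst_pos[OF t0, of j] unfolding Lset_def by simp
qed (use red_term_tau_endpoint_eq[OF tau] in simp)

lemma poly_red_poly_tau_endpoint:
  assumes tau: "is_tau s m \<alpha> \<beta> p c tau"
  shows "poly (red_poly p \<kappa> c) (coord_zero p c tau) = (\<Sum>j\<in>Lset s m \<alpha> \<beta> p c tau.
    Nm \<alpha> \<beta> p j * \<kappa> j * cst p c j * (\<Prod>k\<in>HS p c - {tau}. ncoord p c (coord_zero p c tau) k ^ \<gamma> p c k j))"
    (is "_ = sum ?f _")
proof -
  have "poly (red_poly p \<kappa> c) (coord_zero p c tau) = (\<Sum>j<m. if j \<in> Lset s m \<alpha> \<beta> p c tau then ?f j else 0)"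
    unfolding poly_red_poly_eq_sum
  proof (rule sum.cong[OF refl])
    fix j assume "j \<in> {..<m}"
    then show "Nm \<alpha> \<beta> p j * \<kappa> j * red_term p c (coord_zero p c tau) j =
      (if j \<in> Lset s m \<alpha> \<beta> p c tau then ?f j else 0)"
      using red_term_tau_endpoint_eq[OF tau, of j] by (simp add: mult.assoc)
  qed
  also have "\<dots> = sum ?f {j \<in> {..<m}. j \<in> Lset s m \<alpha> \<beta> p c tau}"
    by (rule sum.inter_filter[symmetric]) simp
  also have "{j \<in> {..<m}. j \<in> Lset s m \<alpha> \<beta> p c tau} = Lset s m \<alpha> \<beta> p c tau"
    unfolding Lset_def by auto
  finally show ?thesis .
qed

lemma ncoord_tau_endpoint:
  "ncoord p c (coord_zero p c tau) k = Bc p c k / \<bar>Ac p k\<bar> - Ac p k / \<bar>Ac p k\<bar> * (Bc p c tau / Ac p tau)"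
  unfolding ncoord_def by (simp add: diff_divide_distrib add_divide_distrib algebra_simps)

lemma in_B_iff:
  "in_B s m \<alpha> \<beta> p \<kappa> c \<longleftrightarrow> (\<exists>tau. is_tau s m \<alpha> \<beta> p c tau \<and> poly (red_poly p \<kappa> c) (coord_zero p c tau) > 0)"
proof -
  have "poly (red_poly p \<kappa> c) (coord_zero p c tau) =
    (\<Sum>j\<in>Lset s m \<alpha> \<beta> p c tau. Nm \<alpha> \<beta> p j * \<kappa> j
        * (\<Prod>i\<in>Jset s \<alpha> \<beta> p. \<bar>Acoef \<alpha> \<beta> p i\<bar> ^ \<alpha> i j)
        * (\<Prod>i\<in>{..<s} - Jset s \<alpha> \<beta> p. Bcoef \<alpha> \<beta> p c i ^ \<alpha> i j)
        * (\<Prod>k\<in>Hset s m \<alpha> \<beta> p c - {tau}.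
             (Bcoef \<alpha> \<beta> p c k / \<bar>Acoef \<alpha> \<beta> p k\<bar>
              - Acoef \<alpha> \<beta> p k / \<bar>Acoef \<alpha> \<beta> p k\<bar> * (Bcoef \<alpha> \<beta> p c tau / Acoef \<alpha> \<beta> p tau))
             ^ gam s m \<alpha> \<beta> p c k j))" if "is_tau s m \<alpha> \<beta> p c tau" for tau
    unfolding poly_red_poly_tau_endpoint[OF that] cst_def ncoord_tau_endpoint by (simp add: mult.assoc)
  then show ?thesis unfolding in_B_def by auto
qed

lemma Acoef_pivot_pos: "a p \<noteq> 0 \<Longrightarrow> Ac p p > 0" using Ac_self by simp

lemma pivot_in_Jset: "p < s \<Longrightarrow> a p \<noteq> 0 \<Longrightarrow> p \<in> J p" unfolding Jset_def using Ac_self by simp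

lemma tau_endpoint_nonneg:
  assumes "a p \<noteq> 0" "p \<in> HS p c" "is_tau s m \<alpha> \<beta> p c tau"
  shows "0 \<le> coord_zero p c tau"
  using tau_endpoint_ge[OF assms(3,2) Acoef_pivot_pos[OF assms(1)]] by (simp add: Bc_self)

lemma Ioc_subset_Iset:
  assumes t0: "t0 \<in> pdom p c" and "0 \<le> v"
    and below: "\<And>k. k \<in> HS p c \<Longrightarrow> Ac p k > 0 \<Longrightarrow> coord_zero p c k \<le> v"
  shows "{v<..t0} \<subseteq> IS p c"
proof (intro subsetI, unfold Iset_def, rule INT_I)
  fix w k assume w: "w \<in> {v<..t0}" and k: "k \<in> HS p c"
  then have "k \<in> J p" "k < s" using Hset_subset_reps reps_less unfolding reps_def by blast+
  then have pos: "0 < Ac p k * t0 + Bc p c k" and "Ac p k \<noteq> 0"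
    using t0 Acoef_nonzero unfolding pdom_def by auto
  show "w \<in> Iint \<alpha> \<beta> p c k"
  proof (cases "Ac p k > 0")
    case True
    then show ?thesis using below[OF k True] w unfolding Iint_def by auto
  next
    case False
    then have neg: "Ac p k < 0" using \<open>Ac p k \<noteq> 0\<close> by linarith
    then have "Ac p k * t0 \<le> Ac p k * w" using w by (simp add: mult_left_mono_neg)
    then have "0 < Ac p k * w + Bc p c k" using pos by linarith
    then have "w < coord_zero p c k" using neg by (simp add: field_simps)
    then show ?thesis using neg w \<open>0 \<le> v\<close> unfolding Iint_def by simp
  qed
qed

lemma tau_exists:
  assumes p: "p < s" "a p \<noteq> 0" and pH: "p \<in> HS p c" and t0: "t0 \<in> pdom p c"
  shows "\<exists>tau. is_tau s m \<alpha> \<beta> p c tau"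
proof -
  define K where "K = {k \<in> HS p c. Ac p k > 0}"
  have "finite K" unfolding K_def using finite_Hset by simp
  moreover have pK: "p \<in> K" unfolding K_def using pH Acoef_pivot_pos[OF p(2)] by simp
  ultimately have "Max ((\<lambda>k. coord_zero p c k) ` K) \<in> (\<lambda>k. coord_zero p c k) ` K" by (intro Max_in) auto
  then obtain tau where tau: "tau \<in> K" "coord_zero p c tau = Max ((\<lambda>k. coord_zero p c k) ` K)" by auto
  define v where "v = coord_zero p c tau"
  have max: "coord_zero p c k \<le> v" if "k \<in> K" for k using tau(2) \<open>finite K\<close> that unfolding v_def by simp
  have "0 \<le> v" using max[OF pK] by (simp add: Bc_self)
  have "tau < s" using tau(1) Hset_subset_reps reps_less unfolding K_def by blast
  then have "0 < Ac p tau * t0 + Bc p c tau" using t0 unfolding pdom_def by blast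
  then have "v < t0" using tau(1) unfolding K_def v_def by (simp add: field_simps)
  moreover have "{v<..t0} \<subseteq> IS p c"
    by (rule Ioc_subset_Iset[OF t0 \<open>0 \<le> v\<close>]) (use max in \<open>auto simp: K_def\<close>)
  moreover have "IS p c \<subseteq> {v<..}"
  proof
    fix x assume "x \<in> IS p c"
    then have "x \<in> Iint \<alpha> \<beta> p c tau" using tau(1) unfolding Iset_def K_def by blast
    then show "x \<in> {v<..}" using tau(1) unfolding Iint_def K_def v_def by simp
  qed
  ultimately have "IS p c \<noteq> {}" "bdd_below (IS p c)" "Inf (IS p c) = v" by (rule Inf_eq_if_between)+
  then have "is_tau s m \<alpha> \<beta> p c tau" using tau(1) unfolding is_tau_def K_def v_def by simp
  then show ?thesis by blast
qed

text \<open>Moving the zero of every coordinate that vanishes to the right of the endpoint L of I to L - 1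
  enlarges the compatibility class to the left up to L, while the classes in H, and with them the
  reduced polynomial, are unchanged.\<close>
definition shifted_species :: "nat \<Rightarrow> (nat \<Rightarrow> real) \<Rightarrow> nat \<Rightarrow> nat set" where
  "shifted_species p c tau = {i \<in> J p. Ac p i > 0 \<and> coord_zero p c tau < coord_zero p c i}"

definition shifted_constants :: "nat \<Rightarrow> (nat \<Rightarrow> real) \<Rightarrow> nat \<Rightarrow> nat \<Rightarrow> real" where
  "shifted_constants p c tau i =
     (if i \<in> shifted_species p c tau then a p * Ac p i * (coord_zero p c tau - 1) else c i)"

context
  fixes p c tau
  assumes a_p: "a p \<noteq> 0" and pH: "p \<in> HS p c" and tau: "is_tau s m \<alpha> \<beta> p c tau"
begin

lemma Bcoef_shifted_constants:
  "Bc p (shifted_constants p c tau) i =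
    (if i \<in> shifted_species p c tau then Ac p i * (1 - coord_zero p c tau) else Bc p c i)"
proof -
  have "p \<notin> shifted_species p c tau"
    using tau_endpoint_nonneg[OF a_p pH tau] unfolding shifted_species_def by (simp add: Bc_self)
  then show ?thesis
    using a_p is_tauD(2)[OF tau] unfolding Bcoef_def shifted_constants_def by (auto simp: field_simps)
qed

lemma Hset_disjoint_shifted_species: "k \<in> HS p c \<Longrightarrow> k \<notin> shifted_species p c tau"
  using tau_endpoint_ge[OF tau] unfolding shifted_species_def by force

lemma pdom_shifted_constants:
  assumes "coord_zero p c tau < w" "w \<le> y" "y \<in> pdom p c"
  shows "w \<in> pdom p (shifted_constants p c tau)"
  unfolding pdom_def
proof (intro CollectI allI impI)
  fix i assume "i < s"
  then have y: "0 < Ac p i * y + Bc p c i" using assms(3) unfolding pdom_def by blast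
  consider "i \<in> shifted_species p c tau" | "i \<notin> shifted_species p c tau" "Ac p i > 0"
    | "Ac p i = 0" | "Ac p i < 0" by linarith
  then show "0 < Ac p i * w + Bc p (shifted_constants p c tau) i"
  proof cases
    case 1
    then have "0 < Ac p i * (w - coord_zero p c tau + 1)"
      using assms(1) unfolding shifted_species_def by simp
    then show ?thesis using 1 unfolding Bcoef_shifted_constants by (simp add: algebra_simps)
  next
    case 2
    then have "coord_zero p c i < w" using \<open>i < s\<close> assms(1) unfolding shifted_species_def Jset_def by auto
    then show ?thesis using 2 unfolding Bcoef_shifted_constants by (simp add: field_simps)
  next
    case 3
    then show ?thesis using y unfolding Bcoef_shifted_constants shifted_species_def by simp
  next
    case 4
    then have "i \<notin> shifted_species p c tau" unfolding shifted_species_def by auto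
    moreover have "Ac p i * y \<le> Ac p i * w" using assms(2) 4 by (simp add: mult_left_mono_neg)
    ultimately show ?thesis using y unfolding Bcoef_shifted_constants by auto
  qed
qed

lemma poly_ss_poly_shifted_constants:
  assumes t0: "t0 \<in> pdom p c"
  shows "poly (ss_poly p \<kappa> (shifted_constants p c tau)) w =
    poly (red_poly p \<kappa> c) w * (\<Prod>k\<in>reps p c. ncoord p (shifted_constants p c tau) w k ^ \<phi> p c k)"
proof (rule poly_ss_poly_factor)
  let ?M = "shifted_species p c tau" and ?c' = "shifted_constants p c tau"
  show "\<forall>i<s. i \<notin> J p \<longrightarrow> Bc p ?c' i = Bc p c i"
    unfolding Bcoef_shifted_constants shifted_species_def by auto
  show "\<forall>k\<in>HS p c. Bc p ?c' k = Bc p c k"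
    unfolding Bcoef_shifted_constants using Hset_disjoint_shifted_species by auto
  show "\<forall>k\<in>reps p c. \<forall>i\<in>CL p c k. ncoord p ?c' w i = ncoord p ?c' w k"
  proof (intro ballI)
    fix k i assume k: "k \<in> reps p c" and i: "i \<in> CL p c k"
    have kJ: "k \<in> J p" using k unfolding reps_def by blast
    have iJ: "i \<in> J p" "ratio p c i = ratio p c k" using i cls_Jset[OF kJ] by blast+
    have sign: "Ac p i > 0 \<longleftrightarrow> Ac p k > 0" by (rule sign_Acoef_eq_if_same_ratio[OF t0 iJ(1) kJ iJ(2)])
    moreover have "coord_zero p c i = coord_zero p c k" using iJ(2) unfolding ratio_def by simp
    ultimately have M: "i \<in> ?M \<longleftrightarrow> k \<in> ?M" unfolding shifted_species_def using iJ(1) kJ by auto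
    show "ncoord p ?c' w i = ncoord p ?c' w k"
    proof (cases "k \<in> ?M")
      case True
      then have "Ac p i > 0" "Ac p k > 0" using M unfolding shifted_species_def by auto
      then show ?thesis using True M unfolding ncoord_def Bcoef_shifted_constants by (simp add: field_simps)
    next
      case False
      then show ?thesis using ncoord_eq_on_cls[OF t0 k i, of w] M
        unfolding ncoord_def Bcoef_shifted_constants by simp
    qed
  qed
qed

end

context
  fixes p c \<kappa> tau r1
  assumes p: "p < s" "a p \<noteq> 0" and pH: "p \<in> HS p c" and tau: "is_tau s m \<alpha> \<beta> p c tau"
    and maximal: "\<And>c'. finite (ss_roots p \<kappa> c') \<and> card (ss_roots p \<kappa> c') \<le> card (ss_roots p \<kappa> c)"
    and r1: "r1 \<in> ss_roots p \<kappa> c" "\<And>t. t \<in> ss_roots p \<kappa> c \<Longrightarrow> r1 \<le> t"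
begin

lemma first_root_in_pdom: "r1 \<in> pdom p c"
  using r1(1) unfolding ss_roots_def by blast

text \<open>A root of the reduced polynomial between L and the domain would be an additional steady state
  of the shifted class, contradicting maximality.\<close>
lemma red_poly_nonzero_outside_pdom:
  assumes "coord_zero p c tau < z" "z < r1" "z \<notin> pdom p c"
  shows "poly (red_poly p \<kappa> c) z \<noteq> 0"
proof
  assume G: "poly (red_poly p \<kappa> c) z = 0"
  let ?c' = "shifted_constants p c tau"
  have "insert z (ss_roots p \<kappa> c) \<subseteq> ss_roots p \<kappa> ?c'"
  proof
    fix t assume t: "t \<in> insert z (ss_roots p \<kappa> c)"
    then have "coord_zero p c tau < t" "t \<le> (if t = z then r1 else t)" "(if t = z then r1 else t) \<in> pdom p c"
      using assms first_root_in_pdom tau_endpoint_less_pdom[OF tau] unfolding ss_roots_def by auto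
    then have "t \<in> pdom p ?c'" by (rule pdom_shifted_constants[OF p(2) pH tau])
    moreover have "poly (red_poly p \<kappa> c) t = 0"
      using t G ss_poly_root_iff_red_poly_root unfolding ss_roots_def by auto
    ultimately show "t \<in> ss_roots p \<kappa> ?c'"
      unfolding ss_roots_def poly_ss_poly_shifted_constants[OF p(2) pH tau first_root_in_pdom] by simp
  qed
  moreover have "z \<notin> ss_roots p \<kappa> c" using assms(3) unfolding ss_roots_def by blast
  ultimately have "card (ss_roots p \<kappa> c) + 1 \<le> card (ss_roots p \<kappa> ?c')"
    using maximal[of c] maximal[of ?c'] by (metis card_insert_disjoint card_mono Suc_eq_plus1)
  then show False using maximal[of ?c'] by linarith
qed

lemma red_poly_nonzero_before_first_root:
  assumes "coord_zero p c tau < z" "z < r1"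
  shows "poly (red_poly p \<kappa> c) z \<noteq> 0"
proof (cases "z \<in> pdom p c")
  case True
  then show ?thesis using r1(2)[of z] assms(2) ss_poly_root_iff_red_poly_root unfolding ss_roots_def by force
qed (rule red_poly_nonzero_outside_pdom[OF assms])

lemma exists_left_of_first_root:
  assumes "poly (pderiv (ss_poly p \<kappa> c)) r1 \<noteq> 0"
  obtains y where "coord_zero p c tau < y" "y < r1"
    "poly (red_poly p \<kappa> c) y * poly (pderiv (ss_poly p \<kappa> c)) r1 < 0"
proof -
  let ?F = "ss_poly p \<kappa> c"
  have F0: "poly ?F r1 = 0" using r1(1) unfolding ss_roots_def by blast
  obtain d where "d > 0" and d: "\<And>h. 0 < h \<Longrightarrow> h < d \<Longrightarrow> poly ?F (r1 - h) * poly (pderiv ?F) r1 < 0"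
  proof (cases "poly (pderiv ?F) r1 > 0")
    case True
    then show ?thesis using DERIV_pos_inc_left[OF poly_DERIV True] F0 that True by (auto simp: mult_neg_pos)
  next
    case False
    then have neg: "poly (pderiv ?F) r1 < 0" using assms by linarith
    show ?thesis using DERIV_neg_dec_left[OF poly_DERIV neg] F0 that neg by (auto simp: mult_pos_neg)
  qed
  obtain \<rho> where "\<rho> > 0" and \<rho>: "\<And>y. \<bar>y - r1\<bar> < \<rho> \<Longrightarrow> y \<in> pdom p c"
    using open_real_nbhd[OF open_pdom first_root_in_pdom] by blast
  define h where "h = min (min d \<rho>) (r1 - coord_zero p c tau) / 2"
  have "coord_zero p c tau < r1" using tau_endpoint_less_pdom[OF tau first_root_in_pdom] .
  then have "0 < min (min d \<rho>) (r1 - coord_zero p c tau)" "min (min d \<rho>) (r1 - coord_zero p c tau) \<le> d"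
    "min (min d \<rho>) (r1 - coord_zero p c tau) \<le> \<rho>"
    "min (min d \<rho>) (r1 - coord_zero p c tau) \<le> r1 - coord_zero p c tau"
    using \<open>d > 0\<close> \<open>\<rho> > 0\<close> by auto
  then have h: "0 < h" "h < d" "h < \<rho>" "coord_zero p c tau < r1 - h" unfolding h_def by linarith+
  then have dom: "r1 - h \<in> pdom p c" using \<rho> by simp
  have "poly ?F (r1 - h) = poly (red_poly p \<kappa> c) (r1 - h) * pos_factor p c (r1 - h)"
    by (rule poly_ss_poly_eq[OF dom])
  moreover have "pos_factor p c (r1 - h) > 0" by (rule pos_factor_pos[OF dom])
  ultimately have "poly (red_poly p \<kappa> c) (r1 - h) * poly (pderiv ?F) r1 < 0"
    using d[OF h(1,2)] by (simp add: mult.assoc mult.commute[of "pos_factor p c (r1 - h)"] mult_less_0_iff zero_less_mult_iff)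
  then show ?thesis using that h by simp
qed

lemma first_root_stable:
  assumes "poly (red_poly p \<kappa> c) (coord_zero p c tau) > 0"
    and "poly (pderiv (ss_poly p \<kappa> c)) r1 \<noteq> 0"
  shows "poly (pderiv (ss_poly p \<kappa> c)) r1 < 0"
proof -
  obtain y where y: "coord_zero p c tau < y" "y < r1"
    "poly (red_poly p \<kappa> c) y * poly (pderiv (ss_poly p \<kappa> c)) r1 < 0"
    using exists_left_of_first_root[OF assms(2)] by blast
  have "0 \<le> poly (red_poly p \<kappa> c) (coord_zero p c tau) * poly (red_poly p \<kappa> c) y"
    by (rule poly_same_sign_if_no_root_between[OF red_poly_nonzero_before_first_root y(1,2)])
  then have "0 < poly (red_poly p \<kappa> c) y"
    using assms(1) red_poly_nonzero_before_first_root[OF y(1,2)] by (simp add: zero_le_mult_iff)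
  then show ?thesis using y(3) by (simp add: mult_less_0_iff)
qed

lemma red_poly_tau_endpoint_nonneg_if_stable:
  assumes "poly (pderiv (ss_poly p \<kappa> c)) r1 < 0"
  shows "poly (red_poly p \<kappa> c) (coord_zero p c tau) \<ge> 0"
proof -
  obtain y where y: "coord_zero p c tau < y" "y < r1"
    "poly (red_poly p \<kappa> c) y * poly (pderiv (ss_poly p \<kappa> c)) r1 < 0"
    using exists_left_of_first_root assms by force
  have "0 \<le> poly (red_poly p \<kappa> c) (coord_zero p c tau) * poly (red_poly p \<kappa> c) y"
    by (rule poly_same_sign_if_no_root_between[OF red_poly_nonzero_before_first_root y(1,2)])
  moreover have "0 < poly (red_poly p \<kappa> c) y" using y(3) assms by (simp add: mult_less_0_iff)
  ultimately show ?thesis by (simp add: zero_le_mult_iff)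
qed

end

section \<open>Perturbing one rate constant\<close>

lemma Nm_pivot_nonzero: "p < s \<Longrightarrow> a p \<noteq> 0 \<Longrightarrow> j < m \<Longrightarrow> Nm \<alpha> \<beta> p j \<noteq> 0"
  using Nm_eq_lam_a[of p j] lam_nonzero[of j] by simp

lemma reactant_poly_pos:
  assumes "t \<in> pdom p c"
  shows "poly (reactant_poly p c j) t > 0"
  unfolding poly_reactant_poly
proof (rule prod_pos, rule zero_less_power)
  fix l assume "l \<in> {..<s}"
  then show "0 < param p c t l" using assms unfolding pdom_def param_def by auto
qed

text \<open>Dividing by Nm p j makes the perturbation add exactly \<epsilon> times the reactant monomial of
  reaction j to the steady-state polynomial.\<close>
definition perturbed :: "(nat \<Rightarrow> real) \<Rightarrow> nat \<Rightarrow> nat \<Rightarrow> real \<Rightarrow> nat \<Rightarrow> real" where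
  "perturbed \<kappa> p j \<epsilon> = \<kappa>(j := \<kappa> j + \<epsilon> / Nm \<alpha> \<beta> p j)"

context
  fixes p j
  assumes p: "p < s" "a p \<noteq> 0" and j: "j < m"
begin

lemma ss_poly_perturbed: "ss_poly p (perturbed \<kappa> p j \<epsilon>) c = ss_poly p \<kappa> c + smult \<epsilon> (reactant_poly p c j)"
proof -
  have "ss_poly p (perturbed \<kappa> p j \<epsilon>) c = (\<Sum>j'<m. smult (Nm \<alpha> \<beta> p j' * \<kappa> j') (reactant_poly p c j') +
      (if j' = j then smult \<epsilon> (reactant_poly p c j) else 0))"
    unfolding ss_poly_def perturbed_def
    by (rule sum.cong[OF refl]) (use Nm_pivot_nonzero[OF p j] in \<open>auto simp: algebra_simps smult_add_left\<close>)
  also have "\<dots> = ss_poly p \<kappa> c + smult \<epsilon> (reactant_poly p c j)"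
    unfolding sum.distrib ss_poly_def using j by simp
  finally show ?thesis .
qed

lemma poly_red_poly_perturbed:
  "poly (red_poly p (perturbed \<kappa> p j \<epsilon>) c) t = poly (red_poly p \<kappa> c) t + \<epsilon> * red_term p c t j"
proof -
  have "poly (red_poly p (perturbed \<kappa> p j \<epsilon>) c) t = (\<Sum>j'<m. Nm \<alpha> \<beta> p j' * \<kappa> j' * red_term p c t j' +
      (if j' = j then \<epsilon> * red_term p c t j else 0))"
    unfolding poly_red_poly_eq_sum perturbed_def
    by (rule sum.cong[OF refl]) (use Nm_pivot_nonzero[OF p j] in \<open>auto simp: algebra_simps\<close>)
  also have "\<dots> = poly (red_poly p \<kappa> c) t + \<epsilon> * red_term p c t j"
    unfolding sum.distrib poly_red_poly_eq_sum using j by simp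
  finally show ?thesis .
qed

lemma rate_vec_perturbed:
  assumes "rate_vec m \<kappa>" "\<bar>\<epsilon>\<bar> < \<kappa> j * \<bar>Nm \<alpha> \<beta> p j\<bar>"
  shows "rate_vec m (perturbed \<kappa> p j \<epsilon>)"
proof -
  have "\<bar>\<epsilon> / Nm \<alpha> \<beta> p j\<bar> < \<kappa> j"
    using assms(2) Nm_pivot_nonzero[OF p j] by (simp add: abs_divide pos_divide_less_eq)
  then have "0 < \<kappa> j + \<epsilon> / Nm \<alpha> \<beta> p j" by (simp only: abs_less_iff) linarith
  then show ?thesis using assms(1) unfolding rate_vec_def perturbed_def by auto
qed

lemma exists_simple_perturbation:
  assumes rate: "rate_vec m \<kappa>"
    and fin: "finite (ss_roots p \<kappa> c)" and card: "card (ss_roots p \<kappa> c) = N" and "N \<ge> 1"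
    and maximal: "\<And>\<kappa>'. rate_vec m \<kappa>' \<Longrightarrow> finite (ss_roots p \<kappa>' c) \<and> card (ss_roots p \<kappa>' c) \<le> N"
    and "e > 0"
  obtains \<epsilon> where "0 < \<epsilon>" "\<epsilon> < e" "rate_vec m (perturbed \<kappa> p j \<epsilon>)"
    "finite (ss_roots p (perturbed \<kappa> p j \<epsilon>) c)" "card (ss_roots p (perturbed \<kappa> p j \<epsilon>) c) = N"
    "\<And>t. t \<in> ss_roots p (perturbed \<kappa> p j \<epsilon>) c \<Longrightarrow> poly (pderiv (ss_poly p (perturbed \<kappa> p j \<epsilon>) c)) t \<noteq> 0"
proof -
  define P where "P = ss_poly p \<kappa> c"
  define Q where "Q = reactant_poly p c j"
  define e' where "e' = \<kappa> j * \<bar>Nm \<alpha> \<beta> p j\<bar>"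
  have roots: "ss_roots p (perturbed \<kappa> p j \<epsilon>) c = {t \<in> pdom p c. poly (P + smult \<epsilon> Q) t = 0}" for \<epsilon>
    unfolding ss_roots_def ss_poly_perturbed P_def Q_def ..
  have "e' > 0" using rate j Nm_pivot_nonzero[OF p j] unfolding e'_def rate_vec_def by simp
  have rate': "rate_vec m (perturbed \<kappa> p j \<epsilon>)" if "\<bar>\<epsilon>\<bar> < e'" for \<epsilon>
    using rate_vec_perturbed[OF rate] that unfolding e'_def .
  have "\<exists>\<epsilon>. 0 < \<epsilon> \<and> \<epsilon> < min e e' \<and> card {t \<in> pdom p c. poly (P + smult \<epsilon> Q) t = 0} = N \<and>
    (\<forall>t\<in>pdom p c. poly (P + smult \<epsilon> Q) t = 0 \<longrightarrow> poly (pderiv (P + smult \<epsilon> Q)) t \<noteq> 0)"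
  proof (rule exists_perturbation_with_simple_roots[OF open_pdom reactant_poly_pos[of _ p c j, folded Q_def]
        _ _ \<open>N \<ge> 1\<close> \<open>e' > 0\<close>])
    show "finite {t \<in> pdom p c. poly P t = 0}" using fin unfolding ss_roots_def P_def .
    show "card {t \<in> pdom p c. poly P t = 0} = N" using card unfolding ss_roots_def P_def .
    show "finite {t \<in> pdom p c. poly (P + smult \<epsilon> Q) t = 0} \<and> card {t \<in> pdom p c. poly (P + smult \<epsilon> Q) t = 0} \<le> N"
      if "\<bar>\<epsilon>\<bar> < e'" for \<epsilon> using maximal[OF rate'[OF that]] unfolding roots .
    show "0 < min e e'" using \<open>e > 0\<close> \<open>e' > 0\<close> by simp
  qed
  then obtain \<epsilon> where "0 < \<epsilon>" "\<epsilon> < min e e'" "card {t \<in> pdom p c. poly (P + smult \<epsilon> Q) t = 0} = N"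
    "\<forall>t\<in>pdom p c. poly (P + smult \<epsilon> Q) t = 0 \<longrightarrow> poly (pderiv (P + smult \<epsilon> Q)) t \<noteq> 0"
    by blast
  moreover from this have "\<bar>\<epsilon>\<bar> < e'" by simp
  ultimately show ?thesis
    using that[of \<epsilon>] rate'[of \<epsilon>] maximal[OF rate'[of \<epsilon>]] unfolding roots ss_poly_perturbed P_def Q_def by auto
qed

end

section \<open>Counting stable steady states\<close>

definition stable_roots :: "nat \<Rightarrow> (nat \<Rightarrow> real) \<Rightarrow> (nat \<Rightarrow> real) \<Rightarrow> real set" where
  "stable_roots p \<kappa> c = {t \<in> ss_roots p \<kappa> c. poly (pderiv (ss_poly p \<kappa> c)) t < 0}"

lemma stable_roots_subset: "stable_roots p \<kappa> c \<subseteq> ss_roots p \<kappa> c" unfolding stable_roots_def by blast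

lemma stable_roots_separated:
  assumes "r \<in> stable_roots p \<kappa> c" "r' \<in> stable_roots p \<kappa> c" "r < r'"
  shows "\<exists>z\<in>ss_roots p \<kappa> c. r < z \<and> z < r'"
proof -
  obtain z where z: "r < z" "z < r'" "poly (ss_poly p \<kappa> c) z = 0"
    using poly_root_between_if_pderiv_neg[OF assms(3)] assms(1,2) unfolding stable_roots_def ss_roots_def by auto
  moreover have "z \<in> pdom p c"
    using pdom_between[of r p c r' z] assms(1,2) z(1,2) unfolding stable_roots_def ss_roots_def by auto
  ultimately show ?thesis unfolding ss_roots_def by auto
qed

lemma unstable_roots_separated:
  assumes simple: "\<forall>t\<in>ss_roots p \<kappa> c. poly (pderiv (ss_poly p \<kappa> c)) t \<noteq> 0"
    and "r \<in> ss_roots p \<kappa> c - stable_roots p \<kappa> c" "r' \<in> ss_roots p \<kappa> c - stable_roots p \<kappa> c" "r < r'"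
  shows "\<exists>z\<in>ss_roots p \<kappa> c. r < z \<and> z < r'"
proof -
  have "poly (pderiv (ss_poly p \<kappa> c)) r > 0" "poly (pderiv (ss_poly p \<kappa> c)) r' > 0"
    using assms unfolding stable_roots_def by force+
  then obtain z where z: "r < z" "z < r'" "poly (ss_poly p \<kappa> c) z = 0"
    using poly_root_between_if_pderiv_pos[OF assms(4)] assms(2,3) unfolding ss_roots_def by auto
  moreover have "z \<in> pdom p c"
    using pdom_between[of r p c r' z] assms(2,3) z(1,2) unfolding ss_roots_def by auto
  ultimately show ?thesis unfolding ss_roots_def by auto
qed

lemma card_stable_roots_le:
  assumes fin: "finite (ss_roots p \<kappa> c)"
  shows "2 * card (stable_roots p \<kappa> c) \<le> card (ss_roots p \<kappa> c) + 1"
    and "ss_roots p \<kappa> c \<noteq> {} \<Longrightarrow> Min (ss_roots p \<kappa> c) \<notin> stable_roots p \<kappa> c \<Longrightarrow>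
      2 * card (stable_roots p \<kappa> c) \<le> card (ss_roots p \<kappa> c)"
proof -
  have card_diff: "card (ss_roots p \<kappa> c - stable_roots p \<kappa> c) = card (ss_roots p \<kappa> c) - card (stable_roots p \<kappa> c)"
    and "card (stable_roots p \<kappa> c) \<le> card (ss_roots p \<kappa> c)"
    using card_Diff_subset card_mono finite_subset fin stable_roots_subset by metis+
  then show "2 * card (stable_roots p \<kappa> c) \<le> card (ss_roots p \<kappa> c) + 1"
    using card_le_card_Diff_Suc_if_separated[OF fin stable_roots_subset stable_roots_separated] by linarith
  assume "ss_roots p \<kappa> c \<noteq> {}" "Min (ss_roots p \<kappa> c) \<notin> stable_roots p \<kappa> c"
  then show "2 * card (stable_roots p \<kappa> c) \<le> card (ss_roots p \<kappa> c)"
    using card_le_card_Diff_if_separated_Min_notin[OF fin stable_roots_subset _ _ stable_roots_separated]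
      card_diff \<open>card (stable_roots p \<kappa> c) \<le> card (ss_roots p \<kappa> c)\<close> by linarith
qed

lemma card_ss_roots_le:
  assumes fin: "finite (ss_roots p \<kappa> c)"
    and simple: "\<forall>t\<in>ss_roots p \<kappa> c. poly (pderiv (ss_poly p \<kappa> c)) t \<noteq> 0"
  shows "card (ss_roots p \<kappa> c) \<le> 2 * card (stable_roots p \<kappa> c) + 1"
    and "ss_roots p \<kappa> c \<noteq> {} \<Longrightarrow> Min (ss_roots p \<kappa> c) \<in> stable_roots p \<kappa> c \<Longrightarrow>
      card (ss_roots p \<kappa> c) \<le> 2 * card (stable_roots p \<kappa> c)"
proof -
  let ?U = "ss_roots p \<kappa> c - stable_roots p \<kappa> c"
  have U: "?U \<subseteq> ss_roots p \<kappa> c" "ss_roots p \<kappa> c - ?U = stable_roots p \<kappa> c"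
    using stable_roots_subset by blast+
  have "card ?U = card (ss_roots p \<kappa> c) - card (stable_roots p \<kappa> c)"
    and "card (stable_roots p \<kappa> c) \<le> card (ss_roots p \<kappa> c)"
    using card_Diff_subset card_mono finite_subset fin stable_roots_subset by metis+
  moreover note separated = unstable_roots_separated[OF simple]
  ultimately show "card (ss_roots p \<kappa> c) \<le> 2 * card (stable_roots p \<kappa> c) + 1"
    using card_le_card_Diff_Suc_if_separated[OF fin U(1) separated] U(2) by simp
  assume "ss_roots p \<kappa> c \<noteq> {}" "Min (ss_roots p \<kappa> c) \<in> stable_roots p \<kappa> c"
  then show "card (ss_roots p \<kappa> c) \<le> 2 * card (stable_roots p \<kappa> c)"
    using card_le_card_Diff_if_separated_Min_notin[OF fin U(1) _ _ separated] U(2)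
      \<open>card ?U = _\<close> \<open>card (stable_roots p \<kappa> c) \<le> _\<close> by auto
qed

lemma ecard_pos_ss: "p < s \<Longrightarrow> a p \<noteq> 0 \<Longrightarrow> ecard (pos_ss s m \<alpha> \<beta> p \<kappa> c) = ecard (ss_roots p \<kappa> c)"
  unfolding pos_ss_eq_image by (rule ecard_image[OF inj_param])

lemma ecard_stab_ss: "p < s \<Longrightarrow> a p \<noteq> 0 \<Longrightarrow> ecard (stab_ss s m \<alpha> \<beta> p \<kappa> c) = ecard (stable_roots p \<kappa> c)"
  unfolding stab_ss_eq_image stable_roots_def by (rule ecard_image[OF inj_param])

lemma ss_roots_bounded:
  assumes cap: "cap_pos s m \<alpha> \<beta> = enat N" and p: "p < s" "a p \<noteq> 0" and r: "rate_vec m \<kappa>"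
  shows "finite (ss_roots p \<kappa> c) \<and> card (ss_roots p \<kappa> c) \<le> N"
  using ecard_pos_ss_le_cap_pos[OF p r, of c] cap ecard_pos_ss[OF p] ecard_le_enat by metis

lemma exists_config_attaining_cap:
  assumes cap: "cap_pos s m \<alpha> \<beta> = enat N"
  shows "\<exists>\<kappa> c. rate_vec m \<kappa> \<and> ecard (pos_ss s m \<alpha> \<beta> 0 \<kappa> c) = enat N"
proof -
  define A where "A = {ecard (pos_ss s m \<alpha> \<beta> 0 \<kappa> c) | \<kappa> c. rate_vec m \<kappa>}"
  have ne: "A \<noteq> {}" unfolding A_def using rate_vec_one by blast
  have SA: "Sup A = enat N" using cap unfolding cap_pos_def A_def .
  have fin: "finite A"
  proof (rule ccontr)
    assume "infinite A" then have "Sup A = \<infinity>" unfolding Sup_enat_def using ne by simp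
    then show False using SA by simp
  qed
  have "Sup A = Max A" unfolding Sup_enat_def using ne fin by simp
  then have "enat N \<in> A" using Max_in[OF fin ne] SA by simp
  then obtain \<kappa> c where "enat N = ecard (pos_ss s m \<alpha> \<beta> 0 \<kappa> c)" "rate_vec m \<kappa>" unfolding A_def by blast
  then show ?thesis by metis
qed

lemma Bcoef_c_ext: "Bc p c i = - c_ext p c i / a p"
  unfolding Bcoef_def c_ext_def by simp

lemma cls_change_pivot:
  assumes k: "k < s" "a k \<noteq> 0"
  shows "CL k (change_pivot 0 k c) k = CL 0 c k"
proof -
  have Akk: "Ac k k \<noteq> 0" using Ac_self[OF k(2)] by simp
  have A0k: "Ac 0 k \<noteq> 0" using k(2) a0 unfolding Acoef_def by simp
  have "i \<in> CL k (change_pivot 0 k c) k \<longleftrightarrow> i \<in> CL 0 c k" for i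
  proof (cases "i < s \<and> a i \<noteq> 0")
    case False
    then have "i \<notin> CL k (change_pivot 0 k c) k" "i \<notin> CL 0 c k"
      unfolding cls_def Acoef_def using Akk A0k k(2) a0 by auto
    then show ?thesis by simp
  next
    case True
    then have i: "i < s" "a i \<noteq> 0" by auto
    have Aki: "Ac k i \<noteq> 0" "Ac 0 i \<noteq> 0" using i(2) k(2) a0 unfolding Acoef_def by auto
    have L: "i \<in> CL k (change_pivot 0 k c) k \<longleftrightarrow> Bc k (change_pivot 0 k c) i = 0"
      unfolding cls_def using Akk Aki i(1) by (simp add: Bc_self)
    have R: "i \<in> CL 0 c k \<longleftrightarrow> Bc 0 c i / Ac 0 i = Bc 0 c k / Ac 0 k"
      unfolding cls_def using A0k Aki i(1) by simp
    show ?thesis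
    proof (cases "i = k")
      case True then show ?thesis using L R by (simp add: Bc_self)
    next
      case False
      have "Bc k (change_pivot 0 k c) i = 0 \<longleftrightarrow> change_pivot 0 k c i = 0" using False k(2) unfolding Bcoef_def by simp
      also have "\<dots> \<longleftrightarrow> (a k * c_ext 0 c i - a i * c_ext 0 c k) / a 0 = 0" unfolding change_pivot_def ..
      also have "\<dots> \<longleftrightarrow> (- c_ext 0 c i / a 0) / (a i / a 0) = (- c_ext 0 c k / a 0) / (a k / a 0)"
        by (rule cross_diff_zero_iff_ratio_eq[OF k(2) i(2) a0])
      also have "\<dots> \<longleftrightarrow> Bc 0 c i / Ac 0 i = Bc 0 c k / Ac 0 k"
        unfolding Bcoef_c_ext Acoef_def ..
      finally show ?thesis using L R by simp
    qed
  qed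
  then show ?thesis by blast
qed

lemma Hset_change_pivot:
  assumes kH: "k \<in> HS 0 c"
  shows "k < s" "a k \<noteq> 0" "k \<in> HS k (change_pivot 0 k c)"
proof -
  have kR: "k \<in> reps 0 c" using kH Hset_subset_reps by blast
  show ks: "k < s" using reps_less[OF kR] .
  have "k \<in> J 0" using kR unfolding reps_def by blast
  then show ak: "a k \<noteq> 0" unfolding Jset_def Acoef_def by auto
  have ceq: "CL k (change_pivot 0 k c) k = CL 0 c k" by (rule cls_change_pivot[OF ks ak])
  have geq: "\<gamma> k (change_pivot 0 k c) k j = \<gamma> 0 c k j" for j
    unfolding gam_def phi_def ceq ..
  have rep: "is_rep s \<alpha> \<beta> k (change_pivot 0 k c) k"
    unfolding is_rep_iff rep_def using cls_self[OF ks] ks by simp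
  have J: "k \<in> J k" using pivot_in_Jset[OF ks ak] .
  have nc: "\<not> (\<forall>j<m. \<forall>j'<m. \<gamma> 0 c k j = \<gamma> 0 c k j')" using kH unfolding Hset_def by blast
  show "k \<in> HS k (change_pivot 0 k c)" unfolding Hset_def using rep J nc geq by simp
qed

lemma Hset_nonempty:
  assumes fin: "finite (ss_roots 0 \<kappa> c)" and ne: "ss_roots 0 \<kappa> c \<noteq> {}"
  shows "HS 0 c \<noteq> {}"
proof
  assume H: "HS 0 c = {}"
  define C where "C = (\<Sum>j<m. Nm \<alpha> \<beta> 0 j * \<kappa> j * cst 0 c j)"
  have G: "poly (red_poly 0 \<kappa> c) t = C" for t unfolding poly_red_poly H C_def by simp
  obtain r where r: "r \<in> ss_roots 0 \<kappa> c" using ne by blast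
  then have rD: "r \<in> pdom 0 c" and "poly (ss_poly 0 \<kappa> c) r = 0" unfolding ss_roots_def by auto
  then have "C = 0" using ss_poly_root_iff_red_poly_root[OF rD] G by simp
  obtain \<rho> where \<rho>: "\<rho> > 0" "\<forall>y. \<bar>y - r\<bar> < \<rho> \<longrightarrow> y \<in> pdom 0 c" using open_real_nbhd[OF open_pdom rD] by blast
  have "{r <..< r + \<rho>} \<subseteq> ss_roots 0 \<kappa> c"
  proof
    fix y assume "y \<in> {r <..< r + \<rho>}"
    then have yD: "y \<in> pdom 0 c" using \<rho> by auto
    then show "y \<in> ss_roots 0 \<kappa> c" using ss_poly_root_iff_red_poly_root[OF yD] G \<open>C = 0\<close> unfolding ss_roots_def by simp
  qed
  moreover have "infinite {r <..< r + \<rho>}" using \<rho> by simp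
  ultimately show False using fin finite_subset by blast
qed

lemma exists_simple_max_config:
  assumes cap: "cap_pos s m \<alpha> \<beta> = enat N" and "N \<ge> 1"
  obtains \<kappa> c where "rate_vec m \<kappa>" "finite (ss_roots 0 \<kappa> c)" "card (ss_roots 0 \<kappa> c) = N"
    "\<And>t. t \<in> ss_roots 0 \<kappa> c \<Longrightarrow> poly (pderiv (ss_poly 0 \<kappa> c)) t \<noteq> 0"
proof -
  obtain \<kappa> c where r: "rate_vec m \<kappa>" and e: "ecard (pos_ss s m \<alpha> \<beta> 0 \<kappa> c) = enat N"
    using exists_config_attaining_cap[OF cap] by blast
  have fin: "finite (ss_roots 0 \<kappa> c)" and card: "card (ss_roots 0 \<kappa> c) = N"
    using ecard_enat[of "ss_roots 0 \<kappa> c" N] e ecard_pos_ss[OF s_pos a0] by auto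
  obtain \<epsilon> where "rate_vec m (perturbed \<kappa> 0 0 \<epsilon>)" "finite (ss_roots 0 (perturbed \<kappa> 0 0 \<epsilon>) c)"
    "card (ss_roots 0 (perturbed \<kappa> 0 0 \<epsilon>) c) = N"
    "\<And>t. t \<in> ss_roots 0 (perturbed \<kappa> 0 0 \<epsilon>) c \<Longrightarrow> poly (pderiv (ss_poly 0 (perturbed \<kappa> 0 0 \<epsilon>) c)) t \<noteq> 0"
    using exists_simple_perturbation[OF s_pos a0 m_pos r fin card \<open>N \<ge> 1\<close> ss_roots_bounded[OF cap s_pos a0]
      zero_less_one] by blast
  then show ?thesis by (rule that)
qed

lemma exists_simple_max_config_in_B:
  assumes cap: "cap_pos s m \<alpha> \<beta> = enat N" and "N \<ge> 1" and W: "W_meets_B s m \<alpha> \<beta>"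
  obtains p c tau \<kappa> where "p < s" "a p \<noteq> 0" "p \<in> HS p c" "is_tau s m \<alpha> \<beta> p c tau"
    "rate_vec m \<kappa>" "finite (ss_roots p \<kappa> c)" "card (ss_roots p \<kappa> c) = N"
    "\<And>t. t \<in> ss_roots p \<kappa> c \<Longrightarrow> poly (pderiv (ss_poly p \<kappa> c)) t \<noteq> 0"
    "poly (red_poly p \<kappa> c) (coord_zero p c tau) > 0"
proof -
  obtain p \<kappa> c where p: "p < s" "a p \<noteq> 0" and r: "rate_vec m \<kappa>"
    and e: "ecard (pos_ss s m \<alpha> \<beta> p \<kappa> c) = enat N" and pH: "p \<in> HS p c" and B: "in_B s m \<alpha> \<beta> p \<kappa> c"
    using W cap unfolding W_meets_B_def by metis
  obtain tau where tau: "is_tau s m \<alpha> \<beta> p c tau" and pos: "poly (red_poly p \<kappa> c) (coord_zero p c tau) > 0"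
    using B unfolding in_B_iff by blast
  define T where "T = red_term p c (coord_zero p c tau) 0"
  have fin: "finite (ss_roots p \<kappa> c)" and card: "card (ss_roots p \<kappa> c) = N"
    using ecard_enat[of "ss_roots p \<kappa> c" N] e ecard_pos_ss[OF p] by auto
  have small: "poly (red_poly p \<kappa> c) (coord_zero p c tau) / (\<bar>T\<bar> + 1) > 0"
    using pos by (simp add: add_pos_nonneg)
  obtain \<epsilon> where \<epsilon>: "0 < \<epsilon>" "\<epsilon> < poly (red_poly p \<kappa> c) (coord_zero p c tau) / (\<bar>T\<bar> + 1)"
    "rate_vec m (perturbed \<kappa> p 0 \<epsilon>)" "finite (ss_roots p (perturbed \<kappa> p 0 \<epsilon>) c)"
    "card (ss_roots p (perturbed \<kappa> p 0 \<epsilon>) c) = N"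
    "\<And>t. t \<in> ss_roots p (perturbed \<kappa> p 0 \<epsilon>) c \<Longrightarrow> poly (pderiv (ss_poly p (perturbed \<kappa> p 0 \<epsilon>) c)) t \<noteq> 0"
    using exists_simple_perturbation[OF p m_pos r fin card \<open>N \<ge> 1\<close> ss_roots_bounded[OF cap p] small] by blast
  have "poly (red_poly p (perturbed \<kappa> p 0 \<epsilon>) c) (coord_zero p c tau) > 0"
    unfolding poly_red_poly_perturbed[OF p m_pos] T_def[symmetric]
    using add_mult_pos_if_small[OF pos \<epsilon>(1,2)] .
  then show ?thesis using that[OF p pH tau \<epsilon>(3-6)] by blast
qed

lemma exists_Lset_Nm_pos:
  assumes p: "p < s" "a p \<noteq> 0" and tau: "is_tau s m \<alpha> \<beta> p c tau" and t0: "t0 \<in> pdom p c"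
    and r: "rate_vec m \<kappa>" and nonneg: "poly (red_poly p \<kappa> c) (coord_zero p c tau) \<ge> 0"
  shows "\<exists>j\<in>Lset s m \<alpha> \<beta> p c tau. Nm \<alpha> \<beta> p j > 0"
proof (rule ccontr)
  assume "\<not> ?thesis"
  then have neg: "Nm \<alpha> \<beta> p j < 0" if "j \<in> Lset s m \<alpha> \<beta> p c tau" for j
    using Nm_pivot_nonzero[OF p] that unfolding Lset_def by force
  define f where "f j = Nm \<alpha> \<beta> p j * \<kappa> j * red_term p c (coord_zero p c tau) j" for j
  have f_neg: "f j < 0" if "j \<in> Lset s m \<alpha> \<beta> p c tau" for j
  proof -
    have "0 < \<kappa> j * red_term p c (coord_zero p c tau) j"
      using red_term_tau_endpoint(1)[OF tau t0 that] r that unfolding rate_vec_def Lset_def by simp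
    then show ?thesis using neg[OF that] unfolding f_def by (simp add: mult.assoc mult_neg_pos)
  qed
  have f_nonpos: "f j \<le> 0" if "j \<in> {..<m}" for j
  proof (cases "j \<in> Lset s m \<alpha> \<beta> p c tau")
    case True
    then show ?thesis using f_neg by (simp add: less_imp_le)
  next
    case False
    then show ?thesis using red_term_tau_endpoint(2)[OF tau t0 False] that unfolding f_def by simp
  qed
  obtain j0 where "j0 < m" "\<gamma> p c tau j0 = 0" using exists_gam_zero by blast
  then have j0: "j0 \<in> Lset s m \<alpha> \<beta> p c tau" "j0 \<in> {..<m}" unfolding Lset_def by auto
  have "0 < (\<Sum>j<m. - f j)"
    by (rule sum_pos2[OF _ j0(2)]) (use f_neg[OF j0(1)] f_nonpos in auto)
  moreover have "poly (red_poly p \<kappa> c) (coord_zero p c tau) = (\<Sum>j<m. f j)"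
    unfolding poly_red_poly_eq_sum f_def ..
  ultimately show False using nonneg by (simp add: sum_negf)
qed

lemma W_meets_B_if_first_root_stable:
  assumes cap: "cap_pos s m \<alpha> \<beta> = enat N" and p: "p < s" "a p \<noteq> 0" and pH: "p \<in> HS p c"
    and r: "rate_vec m \<kappa>" and fin: "finite (ss_roots p \<kappa> c)" and card: "card (ss_roots p \<kappa> c) = N"
    and "N \<ge> 1" and stable: "Min (ss_roots p \<kappa> c) \<in> stable_roots p \<kappa> c"
  shows "W_meets_B s m \<alpha> \<beta>"
proof -
  let ?r1 = "Min (ss_roots p \<kappa> c)"
  have "ss_roots p \<kappa> c \<noteq> {}" using card \<open>N \<ge> 1\<close> by auto
  then have r1: "?r1 \<in> ss_roots p \<kappa> c" "\<And>t. t \<in> ss_roots p \<kappa> c \<Longrightarrow> ?r1 \<le> t" using fin by auto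
  then have t0: "?r1 \<in> pdom p c" unfolding ss_roots_def by blast
  obtain tau where tau: "is_tau s m \<alpha> \<beta> p c tau" using tau_exists[OF p pH t0] by blast
  have maximal: "\<And>c'. finite (ss_roots p \<kappa> c') \<and> card (ss_roots p \<kappa> c') \<le> card (ss_roots p \<kappa> c)"
    using ss_roots_bounded[OF cap p r] card by simp
  have "poly (red_poly p \<kappa> c) (coord_zero p c tau) \<ge> 0"
    using red_poly_tau_endpoint_nonneg_if_stable[OF p pH tau maximal r1] stable unfolding stable_roots_def by blast
  then obtain j where j: "j \<in> Lset s m \<alpha> \<beta> p c tau" "Nm \<alpha> \<beta> p j > 0"
    using exists_Lset_Nm_pos[OF p tau t0 r] by blast
  then have "j < m" unfolding Lset_def by simp
  obtain \<epsilon> where \<epsilon>: "0 < \<epsilon>" "rate_vec m (perturbed \<kappa> p j \<epsilon>)"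
    "finite (ss_roots p (perturbed \<kappa> p j \<epsilon>) c)" "card (ss_roots p (perturbed \<kappa> p j \<epsilon>) c) = N"
    using exists_simple_perturbation[OF p \<open>j < m\<close> r fin card \<open>N \<ge> 1\<close> ss_roots_bounded[OF cap p] zero_less_one]
    by blast
  have "poly (red_poly p (perturbed \<kappa> p j \<epsilon>) c) (coord_zero p c tau) > 0"
    unfolding poly_red_poly_perturbed[OF p \<open>j < m\<close>]
    using \<open>poly (red_poly p \<kappa> c) (coord_zero p c tau) \<ge> 0\<close> red_term_tau_endpoint(1)[OF tau t0 j(1)] \<epsilon>(1)
    by (simp add: add_nonneg_pos)
  then have "in_B s m \<alpha> \<beta> p (perturbed \<kappa> p j \<epsilon>) c" unfolding in_B_iff using tau by blast
  moreover have "ecard (pos_ss s m \<alpha> \<beta> p (perturbed \<kappa> p j \<epsilon>) c) = cap_pos s m \<alpha> \<beta>"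
    unfolding ecard_pos_ss[OF p] cap using ecard_finite[OF \<epsilon>(3)] \<epsilon>(4) by simp
  ultimately show ?thesis unfolding W_meets_B_def using p pH \<epsilon>(2) by blast
qed

lemma ecard_roots_change_pivot:
  assumes "p < s" "q < s" "a p \<noteq> 0" "a q \<noteq> 0"
  shows "ecard (ss_roots q \<kappa> (change_pivot p q c)) = ecard (ss_roots p \<kappa> c)"
    and "ecard (stable_roots q \<kappa> (change_pivot p q c)) = ecard (stable_roots p \<kappa> c)"
  using pos_ss_change_pivot[OF assms] stab_ss_change_pivot[OF assms]
    ecard_pos_ss[OF assms(1,3)] ecard_pos_ss[OF assms(2,4)] ecard_stab_ss[OF assms(1,3)] ecard_stab_ss[OF assms(2,4)]
  by metis+

lemma W_meets_B_if_many_stable: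
  assumes cap: "cap_pos s m \<alpha> \<beta> = enat N" and "N \<ge> 1" and r: "rate_vec m \<kappa>"
    and fin: "finite (ss_roots 0 \<kappa> c)" and card: "card (ss_roots 0 \<kappa> c) = N"
    and many: "N + 1 \<le> 2 * card (stable_roots 0 \<kappa> c)"
  shows "W_meets_B s m \<alpha> \<beta>"
proof -
  have "ss_roots 0 \<kappa> c \<noteq> {}" using card \<open>N \<ge> 1\<close> by auto
  then obtain k where "k \<in> HS 0 c" using Hset_nonempty[OF fin] by blast
  note k = Hset_change_pivot[OF this]
  let ?c' = "change_pivot 0 k c"
  note ecard_eq = ecard_roots_change_pivot[OF s_pos k(1) a0 k(2), of \<kappa> c]
  have fin': "finite (ss_roots k \<kappa> ?c')" and card': "card (ss_roots k \<kappa> ?c') = N"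
    using ecard_eq(1) ecard_finite[OF fin] card ecard_enat by metis+
  have "card (stable_roots k \<kappa> ?c') = card (stable_roots 0 \<kappa> c)"
    using ecard_eq(2) ecard_finite finite_subset[OF stable_roots_subset fin] ecard_enat by metis
  moreover have "ss_roots k \<kappa> ?c' \<noteq> {}" using card' \<open>N \<ge> 1\<close> by auto
  ultimately have "Min (ss_roots k \<kappa> ?c') \<in> stable_roots k \<kappa> ?c'"
    using card_stable_roots_le(2)[OF fin'] card' many by fastforce
  then show ?thesis using W_meets_B_if_first_root_stable[OF cap k r fin' card' \<open>N \<ge> 1\<close>] by blast
qed

lemma ecard_stab_ss_eq_card:
  assumes "finite (ss_roots p \<kappa> c)" "p < s" "a p \<noteq> 0"
  shows "ecard (stab_ss s m \<alpha> \<beta> p \<kappa> c) = enat (card (stable_roots p \<kappa> c))"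
  using ecard_stab_ss[OF assms(2,3)] ecard_finite finite_subset[OF stable_roots_subset assms(1)] by simp

lemma ecard_stab_ss_le:
  assumes cap: "cap_pos s m \<alpha> \<beta> = enat N" and r: "rate_vec m \<kappa>"
  shows "ecard (stab_ss s m \<alpha> \<beta> 0 \<kappa> c) \<le> enat ((N + 1) div 2)"
proof -
  note roots = ss_roots_bounded[OF cap s_pos a0 r, of c]
  then have "2 * card (stable_roots 0 \<kappa> c) \<le> N + 1" using card_stable_roots_le(1) by fastforce
  then show ?thesis using ecard_stab_ss_eq_card[OF conjunct1[OF roots] s_pos a0] by simp
qed

lemma ecard_stab_ss_le_if_not_W_meets_B:
  assumes cap: "cap_pos s m \<alpha> \<beta> = enat N" and r: "rate_vec m \<kappa>" and "odd N"
    and not_W: "\<not> W_meets_B s m \<alpha> \<beta>"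
  shows "ecard (stab_ss s m \<alpha> \<beta> 0 \<kappa> c) \<le> enat ((N - 1) div 2)"
proof -
  note roots = ss_roots_bounded[OF cap s_pos a0 r, of c]
  have "N \<ge> 1" using \<open>odd N\<close> by (cases N) auto
  have "2 * card (stable_roots 0 \<kappa> c) \<le> N"
  proof (cases "card (ss_roots 0 \<kappa> c) = N")
    case True
    show ?thesis
    proof (rule ccontr)
      assume "\<not> 2 * card (stable_roots 0 \<kappa> c) \<le> N"
      then have "W_meets_B s m \<alpha> \<beta>"
        using W_meets_B_if_many_stable[OF cap \<open>N \<ge> 1\<close> r conjunct1[OF roots] True] by simp
      then show False using not_W by simp
    qed
  next
    case False
    then show ?thesis using roots card_stable_roots_le(1)[OF conjunct1[OF roots]] by simp
  qed
  then have "card (stable_roots 0 \<kappa> c) \<le> (N - 1) div 2" using \<open>odd N\<close> by (elim oddE) simp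
  then show ?thesis using ecard_stab_ss_eq_card[OF conjunct1[OF roots] s_pos a0] by simp
qed

lemma exists_ecard_stab_ss_ge:
  assumes cap: "cap_pos s m \<alpha> \<beta> = enat N"
  shows "\<exists>\<kappa> c. rate_vec m \<kappa> \<and> enat (N div 2) \<le> ecard (stab_ss s m \<alpha> \<beta> 0 \<kappa> c)"
proof (cases "N = 0")
  case True
  then show ?thesis using rate_vec_one by (auto simp: zero_enat_def[symmetric])
next
  case False
  then have "N \<ge> 1" by simp
  then obtain \<kappa> c where r: "rate_vec m \<kappa>" and roots: "finite (ss_roots 0 \<kappa> c)" "card (ss_roots 0 \<kappa> c) = N"
    and simple: "\<And>t. t \<in> ss_roots 0 \<kappa> c \<Longrightarrow> poly (pderiv (ss_poly 0 \<kappa> c)) t \<noteq> 0"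
    using exists_simple_max_config[OF cap] by blast
  have "N div 2 \<le> card (stable_roots 0 \<kappa> c)" using card_ss_roots_le(1)[OF roots(1)] simple roots(2) by fastforce
  then have "enat (N div 2) \<le> ecard (stab_ss s m \<alpha> \<beta> 0 \<kappa> c)"
    using ecard_stab_ss_eq_card[OF roots(1) s_pos a0] by simp
  then show ?thesis using r by blast
qed

lemma exists_ecard_stab_ss_ge_if_W_meets_B:
  assumes cap: "cap_pos s m \<alpha> \<beta> = enat N" and "N \<ge> 1" and W: "W_meets_B s m \<alpha> \<beta>"
  shows "\<exists>\<kappa> c. rate_vec m \<kappa> \<and> enat ((N + 1) div 2) \<le> ecard (stab_ss s m \<alpha> \<beta> 0 \<kappa> c)"
proof -
  obtain p c tau \<kappa> where p: "p < s" "a p \<noteq> 0" and pH: "p \<in> HS p c" and tau: "is_tau s m \<alpha> \<beta> p c tau"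
    and r: "rate_vec m \<kappa>" and fin: "finite (ss_roots p \<kappa> c)" and card: "card (ss_roots p \<kappa> c) = N"
    and simple: "\<And>t. t \<in> ss_roots p \<kappa> c \<Longrightarrow> poly (pderiv (ss_poly p \<kappa> c)) t \<noteq> 0"
    and pos: "poly (red_poly p \<kappa> c) (coord_zero p c tau) > 0"
    by (rule exists_simple_max_config_in_B[OF cap \<open>N \<ge> 1\<close> W]) (rule that)
  let ?r1 = "Min (ss_roots p \<kappa> c)"
  have "ss_roots p \<kappa> c \<noteq> {}" using card \<open>N \<ge> 1\<close> by auto
  then have r1: "?r1 \<in> ss_roots p \<kappa> c" "\<And>t. t \<in> ss_roots p \<kappa> c \<Longrightarrow> ?r1 \<le> t" using fin by auto
  have maximal: "\<And>c'. finite (ss_roots p \<kappa> c') \<and> card (ss_roots p \<kappa> c') \<le> card (ss_roots p \<kappa> c)"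
    using ss_roots_bounded[OF cap p r] card by simp
  have "?r1 \<in> stable_roots p \<kappa> c"
    using first_root_stable[OF p pH tau maximal r1 pos simple[OF r1(1)]] r1(1) unfolding stable_roots_def by blast
  then have "(N + 1) div 2 \<le> card (stable_roots p \<kappa> c)"
    using card_ss_roots_le(2)[OF fin] simple card \<open>ss_roots p \<kappa> c \<noteq> {}\<close> by fastforce
  moreover have "stab_ss s m \<alpha> \<beta> p \<kappa> c = stab_ss s m \<alpha> \<beta> 0 \<kappa> (change_pivot p 0 c)"
    by (rule stab_ss_change_pivot[OF p(1) s_pos p(2) a0])
  ultimately have "enat ((N + 1) div 2) \<le> ecard (stab_ss s m \<alpha> \<beta> 0 \<kappa> (change_pivot p 0 c))"
    using ecard_stab_ss_eq_card[OF fin p] by simp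
  then show ?thesis using r by blast
qed

lemma cap_stab_eqI:
  assumes up: "\<And>\<kappa> c. rate_vec m \<kappa> \<Longrightarrow> ecard (stab_ss s m \<alpha> \<beta> 0 \<kappa> c) \<le> enat K"
    and lo: "\<exists>\<kappa> c. rate_vec m \<kappa> \<and> enat K \<le> ecard (stab_ss s m \<alpha> \<beta> 0 \<kappa> c)"
  shows "cap_stab s m \<alpha> \<beta> = enat K"
proof (rule antisym)
  show "cap_stab s m \<alpha> \<beta> \<le> enat K" unfolding cap_stab_def by (rule Sup_least) (use up in blast)
  obtain \<kappa> c where "rate_vec m \<kappa>" "enat K \<le> ecard (stab_ss s m \<alpha> \<beta> 0 \<kappa> c)" using lo by blast
  then show "enat K \<le> cap_stab s m \<alpha> \<beta>" unfolding cap_stab_def by (blast intro: Sup_upper2)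
qed

lemma cap_stab_eq:
  assumes cap: "cap_pos s m \<alpha> \<beta> = enat N"
  shows "even N \<Longrightarrow> cap_stab s m \<alpha> \<beta> = enat (N div 2)"
    and "odd N \<Longrightarrow> \<not> W_meets_B s m \<alpha> \<beta> \<Longrightarrow> cap_stab s m \<alpha> \<beta> = enat ((N - 1) div 2)"
    and "odd N \<Longrightarrow> W_meets_B s m \<alpha> \<beta> \<Longrightarrow> cap_stab s m \<alpha> \<beta> = enat ((N + 1) div 2)"
proof -
  assume "even N"
  then have "(N + 1) div 2 = N div 2" by (elim evenE) simp
  then show "cap_stab s m \<alpha> \<beta> = enat (N div 2)"
    using cap_stab_eqI[OF ecard_stab_ss_le[OF cap, unfolded \<open>(N + 1) div 2 = N div 2\<close>] exists_ecard_stab_ss_ge[OF cap]]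
    by simp
next
  assume "odd N" "\<not> W_meets_B s m \<alpha> \<beta>"
  moreover have "N div 2 = (N - 1) div 2" using \<open>odd N\<close> by (elim oddE) simp
  ultimately show "cap_stab s m \<alpha> \<beta> = enat ((N - 1) div 2)"
    using cap_stab_eqI[OF ecard_stab_ss_le_if_not_W_meets_B[OF cap] exists_ecard_stab_ss_ge[OF cap, unfolded \<open>N div 2 = _\<close>]]
    by simp
next
  assume "odd N" "W_meets_B s m \<alpha> \<beta>"
  moreover have "N \<ge> 1" using \<open>odd N\<close> by (cases N) auto
  ultimately show "cap_stab s m \<alpha> \<beta> = enat ((N + 1) div 2)"
    using cap_stab_eqI[OF ecard_stab_ss_le[OF cap] exists_ecard_stab_ss_ge_if_W_meets_B[OF cap]] by blast
qed

end

theorem theorem3p1: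
  fixes s m :: nat and \<alpha> \<beta> :: "nat \<Rightarrow> nat \<Rightarrow> nat"
  assumes "is_network s m \<alpha> \<beta>"
    and "one_dim_stoich s m \<alpha> \<beta>"
    and "Nm \<alpha> \<beta> 0 0 \<noteq> 0"
    and "cap_pos s m \<alpha> \<beta> < \<infinity>"
  shows "(\<forall>n. cap_pos s m \<alpha> \<beta> = enat n \<and> even n \<longrightarrow> cap_stab s m \<alpha> \<beta> = enat (n div 2)) \<and>
         (\<forall>n. cap_pos s m \<alpha> \<beta> = enat n \<and> odd n \<longrightarrow>
           (\<not> W_meets_B s m \<alpha> \<beta> \<longrightarrow> cap_stab s m \<alpha> \<beta> = enat ((n - 1) div 2)) \<and>
           (W_meets_B s m \<alpha> \<beta> \<longrightarrow> cap_stab s m \<alpha> \<beta> = enat ((n + 1) div 2)))"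
proof -
  interpret one_dim_network s m \<alpha> \<beta> using assms(1-3) by unfold_locales
  show ?thesis using cap_stab_eq by blast
qed

end
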